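(* $\mathcal{H}(\mathcal{G})$ is an autonomous category such that for every $g \in \mathcal{G}$, with $g \in \mathcal{G}(i,j)$ (so that $g\bar g = 1_i$): $$H_g^\ast = H_g,\qquad \Lambda_{H_g} = \Lambda_g = \Delta_g \circ L_g,\qquad \lambda_{H_g} = \lambda_g = l_{i} \circ m_{g,\bar g}\circ(\mathrm{id}_g \diamond S_g).$$
   Context: Let $\mathcal{G}$ be a groupoid (morphisms written multiplicatively from left to right, $\bar g$ the inverse of $g$, $1_i$ the identity of the object $i$, $\mathcal{G}(i,j)$ the morphisms from $i$ to $j$). In a braided monoidal category with product $\diamond$ and unit object $\mathbf{1}$, a Hopf $\mathcal{G}$-algebra is a family of objects $H=\{H_g\}_{g\in\mathcal{G}}$ with comultiplications $\Delta_g: H_g\to H_g\diamond H_g$, counits $\epsilon_g:H_g\to\mathbf{1}$, multiplications $m_{g,h}:H_g\diamond H_h\to H_{gh}$ (for composable $g,h$), units $\eta_i:\mathbf{1}\to H_{1_i}$, antipodes $S_g:H_g\to H_{\bar g}$ with inverses $\bar S_g$, satisfying the usual coassociativity, counit, associativity, unit, bialgebra compatibility ($\Delta_{gh}\circ m_{g,h}=(m_{g,h}\diamond m_{g,h})\circ(\mathrm{id}_g\diamond\gamma_{g,h}\diamond\mathrm{id}_h)\circ(\Delta_g\diamond\Delta_h)$, etc.) and antipode axioms ($m_{\bar g,g}\circ(S_g\diamond\mathrm{id}_g)\circ\Delta_g=\eta_j\circ\epsilon_g$, $m_{g,\bar g}\circ(\mathrm{id}_g\diamond S_g)\circ\Delta_g=\eta_i\circ\epsilon_g$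 for $g\in\mathcal{G}(i,j)$). A left cointegral is a family $l=\{l_i:H_{1_i}\to\mathbf{1}\}$ with $(\mathrm{id}_{1_i}\diamond l_i)\circ\Delta_{1_i}=\eta_i\circ l_i$; a right integral is a family $L=\{L_g:\mathbf{1}\to H_g\}$ with $m_{g,h}\circ(L_g\diamond\mathrm{id}_h)=L_{gh}\circ\epsilon_h$. $\mathcal{H}(\mathcal{G})$ denotes the free braided monoidal category generated by a Hopf $\mathcal{G}$-algebra $H$ with a left cointegral $l$ and a right integral $L$ such that $l_i\circ L_{1_i}=\mathrm{id}_{\mathbf{1}}=l_i\circ S_{1_i}\circ L_{1_i}$ for every object $i$. Autonomous means every object $A$ has a right dual $(A^\ast,\Lambda_A:\mathbf{1}\to A^\ast\diamond A,\ \lambda_A:A\diamond A^\ast\to\mathbf{1})$ satisfying the two zig-zag (snake) identities; here $\Lambda_A,\lambda_A$ for general objects are defined inductively by $(A\diamond B)^\ast=B^\ast\diamond A^\ast$, $\Lambda_{A\diamond B}=(\mathrm{id}_{B^\ast}\diamond\Lambda_A\diamond\mathrm{id}_B)\circ\Lambda_B$, $\lambda_{A\diamond B}=\lambda_A\circ(\mathrm{id}_A\diamond\lambda_B\diamond\mathrm{id}_{A^\ast})$. *)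

theory Defs
  imports Main
begin

text \<open>A groupoid given by a set of objects, a set of morphisms, source, target,
  composition written from left to right (gcmp g h = gh for g in G(i,j), h in G(j,k)),
  inverse and identities.\<close>

record ('o, 'g) groupoid =
  gOb  :: "'o set"
  gMor :: "'g set"
  gsrc :: "'g \<Rightarrow> 'o"
  gtgt :: "'g \<Rightarrow> 'o"
  gcmp :: "'g \<Rightarrow> 'g \<Rightarrow> 'g"
  ginv :: "'g \<Rightarrow> 'g"
  gidn :: "'o \<Rightarrow> 'g"

definition is_groupoid :: "('o, 'g) groupoid \<Rightarrow> bool" where
  "is_groupoid G \<longleftrightarrow>
     (\<forall>i\<in>gOb G. gidn G i \<in> gMor G \<and> gsrc G (gidn G i) = i \<and> gtgt G (gidn G i) = i) \<and>
     (\<forall>g\<in>gMor G. gsrc G g \<in> gOb G \<and> gtgt G g \<in> gOb G) \<and>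
     (\<forall>g\<in>gMor G. \<forall>h\<in>gMor G. gtgt G g = gsrc G h \<longrightarrow>
         gcmp G g h \<in> gMor G \<and> gsrc G (gcmp G g h) = gsrc G g \<and> gtgt G (gcmp G g h) = gtgt G h) \<and>
     (\<forall>g\<in>gMor G. \<forall>h\<in>gMor G. \<forall>k\<in>gMor G. gtgt G g = gsrc G h \<longrightarrow> gtgt G h = gsrc G k \<longrightarrow>
         gcmp G (gcmp G g h) k = gcmp G g (gcmp G h k)) \<and>
     (\<forall>g\<in>gMor G. gcmp G (gidn G (gsrc G g)) g = g \<and> gcmp G g (gidn G (gtgt G g)) = g) \<and>
     (\<forall>g\<in>gMor G. ginv G g \<in> gMor G \<and> gsrc G (ginv G g) = gtgt G g \<and> gtgt G (ginv G g) = gsrc G g \<and>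
         gcmp G g (ginv G g) = gidn G (gsrc G g) \<and> gcmp G (ginv G g) g = gidn G (gtgt G g))"

section \<open>The free braided (strict) monoidal category H(G)\<close>

text \<open>Objects are words (lists) of generating objects H_g (g a morphism of G);
  the monoidal product is concatenation and the unit object is the empty word.
  Morphisms are well-typed terms modulo the least congruence generated by the axioms.\<close>

datatype ('o, 'g) hterm =
    HId "'g list"
  | HComp "('o, 'g) hterm" "('o, 'g) hterm"   \<comment> \<open>HComp f g = f \<circ> g (g first)\<close>
  | HTens "('o, 'g) hterm" "('o, 'g) hterm"
  | HBr "'g list" "'g list"
  | HBrI "'g list" "'g list"
  | HDelta 'g
  | HEps 'g
  | HMult 'g 'g
  | HUnit 'o
  | HS 'g
  | HSi 'g
  | Hcoint 'o                                \<comment> \<open>left cointegral l_i : H_{1_i} \<rightarrow> 1\<close>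
  | Hint 'g                                  \<comment> \<open>right integral L_g : 1 \<rightarrow> H_g\<close>

fun hdom :: "('o, 'g) groupoid \<Rightarrow> ('o, 'g) hterm \<Rightarrow> 'g list" where
  "hdom G (HId A) = A"
| "hdom G (HComp f g) = hdom G g"
| "hdom G (HTens f g) = hdom G f @ hdom G g"
| "hdom G (HBr A B) = A @ B"
| "hdom G (HBrI A B) = B @ A"
| "hdom G (HDelta g) = [g]"
| "hdom G (HEps g) = [g]"
| "hdom G (HMult g h) = [g, h]"
| "hdom G (HUnit i) = []"
| "hdom G (HS g) = [g]"
| "hdom G (HSi g) = [ginv G g]"
| "hdom G (Hcoint i) = [gidn G i]"
| "hdom G (Hint g) = []"

fun hcod :: "('o, 'g) groupoid \<Rightarrow> ('o, 'g) hterm \<Rightarrow> 'g list" where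
  "hcod G (HId A) = A"
| "hcod G (HComp f g) = hcod G f"
| "hcod G (HTens f g) = hcod G f @ hcod G g"
| "hcod G (HBr A B) = B @ A"
| "hcod G (HBrI A B) = A @ B"
| "hcod G (HDelta g) = [g, g]"
| "hcod G (HEps g) = []"
| "hcod G (HMult g h) = [gcmp G g h]"
| "hcod G (HUnit i) = [gidn G i]"
| "hcod G (HS g) = [ginv G g]"
| "hcod G (HSi g) = [g]"
| "hcod G (Hcoint i) = []"
| "hcod G (Hint g) = [g]"

fun hwt :: "('o, 'g) groupoid \<Rightarrow> ('o, 'g) hterm \<Rightarrow> bool" where
  "hwt G (HId A) = (set A \<subseteq> gMor G)"
| "hwt G (HComp f g) = (hwt G f \<and> hwt G g \<and> hcod G g = hdom G f)"
| "hwt G (HTens f g) = (hwt G f \<and> hwt G g)"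
| "hwt G (HBr A B) = (set A \<subseteq> gMor G \<and> set B \<subseteq> gMor G)"
| "hwt G (HBrI A B) = (set A \<subseteq> gMor G \<and> set B \<subseteq> gMor G)"
| "hwt G (HDelta g) = (g \<in> gMor G)"
| "hwt G (HEps g) = (g \<in> gMor G)"
| "hwt G (HMult g h) = (g \<in> gMor G \<and> h \<in> gMor G \<and> gtgt G g = gsrc G h)"
| "hwt G (HUnit i) = (i \<in> gOb G)"
| "hwt G (HS g) = (g \<in> gMor G)"
| "hwt G (HSi g) = (g \<in> gMor G)"
| "hwt G (Hcoint i) = (i \<in> gOb G)"
| "hwt G (Hint g) = (g \<in> gMor G)"

inductive heq :: "('o, 'g) groupoid \<Rightarrow> ('o, 'g) hterm \<Rightarrow> ('o, 'g) hterm \<Rightarrow> bool"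
  for G :: "('o, 'g) groupoid" where
  refl: "hwt G f \<Longrightarrow> heq G f f"
| sym: "heq G f g \<Longrightarrow> heq G g f"
| trans: "heq G f g \<Longrightarrow> heq G g h \<Longrightarrow> heq G f h"
| comp_cong: "heq G f f' \<Longrightarrow> heq G g g' \<Longrightarrow> hcod G g = hdom G f \<Longrightarrow>
     heq G (HComp f g) (HComp f' g')"
| tens_cong: "heq G f f' \<Longrightarrow> heq G g g' \<Longrightarrow> heq G (HTens f g) (HTens f' g')"
| id_left: "hwt G f \<Longrightarrow> heq G (HComp (HId (hcod G f)) f) f"
| id_right: "hwt G f \<Longrightarrow> heq G (HComp f (HId (hdom G f))) f"
| comp_assoc: "hwt G f \<Longrightarrow> hwt G g \<Longrightarrow> hwt G h \<Longrightarrow> hcod G h = hdom G g \<Longrightarrow> hcod G g = hdom G f \<Longrightarrow>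
     heq G (HComp (HComp f g) h) (HComp f (HComp g h))"
| tens_assoc: "hwt G f \<Longrightarrow> hwt G g \<Longrightarrow> hwt G h \<Longrightarrow>
     heq G (HTens (HTens f g) h) (HTens f (HTens g h))"
| tens_unit_left: "hwt G f \<Longrightarrow> heq G (HTens (HId []) f) f"
| tens_unit_right: "hwt G f \<Longrightarrow> heq G (HTens f (HId [])) f"
| tens_id: "set A \<subseteq> gMor G \<Longrightarrow> set B \<subseteq> gMor G \<Longrightarrow> heq G (HTens (HId A) (HId B)) (HId (A @ B))"
| interchange: "hwt G f \<Longrightarrow> hwt G g \<Longrightarrow> hwt G f' \<Longrightarrow> hwt G g' \<Longrightarrow>
     hcod G f' = hdom G f \<Longrightarrow> hcod G g' = hdom G g \<Longrightarrow>
     heq G (HComp (HTens f g) (HTens f' g')) (HTens (HComp f f') (HComp g g'))"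
| br_natural: "hwt G f \<Longrightarrow> hwt G g \<Longrightarrow>
     heq G (HComp (HBr (hcod G f) (hcod G g)) (HTens f g)) (HComp (HTens g f) (HBr (hdom G f) (hdom G g)))"
| br_hex1: "set A \<subseteq> gMor G \<Longrightarrow> set B \<subseteq> gMor G \<Longrightarrow> set C \<subseteq> gMor G \<Longrightarrow>
     heq G (HBr A (B @ C)) (HComp (HTens (HId B) (HBr A C)) (HTens (HBr A B) (HId C)))"
| br_hex2: "set A \<subseteq> gMor G \<Longrightarrow> set B \<subseteq> gMor G \<Longrightarrow> set C \<subseteq> gMor G \<Longrightarrow>
     heq G (HBr (A @ B) C) (HComp (HTens (HBr A C) (HId B)) (HTens (HId A) (HBr B C)))"
| br_inv1: "set A \<subseteq> gMor G \<Longrightarrow> set B \<subseteq> gMor G \<Longrightarrow> heq G (HComp (HBrI A B) (HBr A B)) (HId (A @ B))"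
| br_inv2: "set A \<subseteq> gMor G \<Longrightarrow> set B \<subseteq> gMor G \<Longrightarrow> heq G (HComp (HBr A B) (HBrI A B)) (HId (B @ A))"
| coassoc: "g \<in> gMor G \<Longrightarrow>
     heq G (HComp (HTens (HDelta g) (HId [g])) (HDelta g)) (HComp (HTens (HId [g]) (HDelta g)) (HDelta g))"
| counit_left: "g \<in> gMor G \<Longrightarrow> heq G (HComp (HTens (HEps g) (HId [g])) (HDelta g)) (HId [g])"
| counit_right: "g \<in> gMor G \<Longrightarrow> heq G (HComp (HTens (HId [g]) (HEps g)) (HDelta g)) (HId [g])"
| massoc: "g \<in> gMor G \<Longrightarrow> h \<in> gMor G \<Longrightarrow> k \<in> gMor G \<Longrightarrow> gtgt G g = gsrc G h \<Longrightarrow> gtgt G h = gsrc G k \<Longrightarrow>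
     heq G (HComp (HMult (gcmp G g h) k) (HTens (HMult g h) (HId [k])))
           (HComp (HMult g (gcmp G h k)) (HTens (HId [g]) (HMult h k)))"
| unit_left: "g \<in> gMor G \<Longrightarrow>
     heq G (HComp (HMult (gidn G (gsrc G g)) g) (HTens (HUnit (gsrc G g)) (HId [g]))) (HId [g])"
| unit_right: "g \<in> gMor G \<Longrightarrow>
     heq G (HComp (HMult g (gidn G (gtgt G g))) (HTens (HId [g]) (HUnit (gtgt G g)))) (HId [g])"
| bialg_delta_mult: "g \<in> gMor G \<Longrightarrow> h \<in> gMor G \<Longrightarrow> gtgt G g = gsrc G h \<Longrightarrow>
     heq G (HComp (HDelta (gcmp G g h)) (HMult g h))
           (HComp (HTens (HMult g h) (HMult g h))
              (HComp (HTens (HTens (HId [g]) (HBr [g] [h])) (HId [h])) (HTens (HDelta g) (HDelta h))))"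
| bialg_eps_mult: "g \<in> gMor G \<Longrightarrow> h \<in> gMor G \<Longrightarrow> gtgt G g = gsrc G h \<Longrightarrow>
     heq G (HComp (HEps (gcmp G g h)) (HMult g h)) (HTens (HEps g) (HEps h))"
| bialg_delta_unit: "i \<in> gOb G \<Longrightarrow>
     heq G (HComp (HDelta (gidn G i)) (HUnit i)) (HTens (HUnit i) (HUnit i))"
| bialg_eps_unit: "i \<in> gOb G \<Longrightarrow> heq G (HComp (HEps (gidn G i)) (HUnit i)) (HId [])"
| antipode_left: "g \<in> gMor G \<Longrightarrow>
     heq G (HComp (HMult (ginv G g) g) (HComp (HTens (HS g) (HId [g])) (HDelta g)))
           (HComp (HUnit (gtgt G g)) (HEps g))"
| antipode_right: "g \<in> gMor G \<Longrightarrow>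
     heq G (HComp (HMult g (ginv G g)) (HComp (HTens (HId [g]) (HS g)) (HDelta g)))
           (HComp (HUnit (gsrc G g)) (HEps g))"
| antipode_inv1: "g \<in> gMor G \<Longrightarrow> heq G (HComp (HSi g) (HS g)) (HId [g])"
| antipode_inv2: "g \<in> gMor G \<Longrightarrow> heq G (HComp (HS g) (HSi g)) (HId [ginv G g])"
| cointegral: "i \<in> gOb G \<Longrightarrow>
     heq G (HComp (HTens (HId [gidn G i]) (Hcoint i)) (HDelta (gidn G i))) (HComp (HUnit i) (Hcoint i))"
| integral: "g \<in> gMor G \<Longrightarrow> h \<in> gMor G \<Longrightarrow> gtgt G g = gsrc G h \<Longrightarrow>
     heq G (HComp (HMult g h) (HTens (Hint g) (HId [h]))) (HComp (Hint (gcmp G g h)) (HEps h))"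
| normal1: "i \<in> gOb G \<Longrightarrow> heq G (HComp (Hcoint i) (Hint (gidn G i))) (HId [])"
| normal2: "i \<in> gOb G \<Longrightarrow>
     heq G (HComp (Hcoint i) (HComp (HS (gidn G i)) (Hint (gidn G i)))) (HId [])"

text \<open>Duals: H_g^* = H_g, hence (A \<diamond> B)^* = B^* \<diamond> A^* gives A^* = rev A.\<close>

definition hdual :: "'g list \<Rightarrow> 'g list" where
  "hdual A = rev A"

definition hLam_gen :: "'g \<Rightarrow> ('o, 'g) hterm" where
  "hLam_gen g = HComp (HDelta g) (Hint g)"

definition hlam_gen :: "('o, 'g) groupoid \<Rightarrow> 'g \<Rightarrow> ('o, 'g) hterm" where
  "hlam_gen G g = HComp (Hcoint (gsrc G g)) (HComp (HMult g (ginv G g)) (HTens (HId [g]) (HS g)))"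

fun hLam :: "('o, 'g) groupoid \<Rightarrow> 'g list \<Rightarrow> ('o, 'g) hterm" where
  "hLam G [] = HId []"
| "hLam G (g # B) = HComp (HTens (HTens (HId (hdual B)) (hLam_gen g)) (HId B)) (hLam G B)"

fun hlam :: "('o, 'g) groupoid \<Rightarrow> 'g list \<Rightarrow> ('o, 'g) hterm" where
  "hlam G [] = HId []"
| "hlam G (g # B) = HComp (hlam_gen G g) (HTens (HTens (HId [g]) (hlam G B)) (HId (hdual [g])))"

definition is_right_dual :: "('o, 'g) groupoid \<Rightarrow> 'g list \<Rightarrow> 'g list \<Rightarrow> ('o, 'g) hterm \<Rightarrow> ('o, 'g) hterm \<Rightarrow> bool" where
  "is_right_dual G A Ad Lm lm \<longleftrightarrow>
     hwt G Lm \<and> hdom G Lm = [] \<and> hcod G Lm = Ad @ A \<and>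
     hwt G lm \<and> hdom G lm = A @ Ad \<and> hcod G lm = [] \<and>
     heq G (HComp (HTens lm (HId A)) (HTens (HId A) Lm)) (HId A) \<and>
     heq G (HComp (HTens (HId Ad) lm) (HTens Lm (HId Ad))) (HId Ad)"

end

theory Submission
  imports Defs
begin

(*
  The zig-zag identities are equations in a free category, i.e. between classes of
  well-typed terms. To compute with them, whiskered generators id \<diamond> t \<diamond> id act on
  sets of terms by post-composition; every defining axiom, and the interchange law for
  morphisms on disjoint tensor factors, then becomes an equation between such actions
  that can be used for rewriting, and an identity f = id holds once f fixes the class of id.

  For a generator H_g with g in G(i,j) put e = 1_i and use Sweedler notation with the
  braiding suppressed. The integral property m(L_e \<diamond> x) = L_g \<epsilon>(x) transports L_g to L_e:
    L_e(1) x \<diamond> L_e(2) = L_g(1) \<diamond> L_g(2) S(x)   and   x S(L_g(1)) \<diamond> L_g(2) = S(L_e(1)) \<diamond> L_e(2) x.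
  Applying l_i to the second, resp. first, factor turns the two zig-zag composites into
  L_e(1) l_i(L_e(2)) x and l_i(S(L_e(1))) L_e(2) x, and both L_e(1) l_i(L_e(2)) and
  l_i(S(L_e(1))) L_e(2) equal 1 by the cointegral property and the normalisations
  l_i L_e = 1 = l_i S L_e. For a word g B the duality data nest those of H_g around
  those of B, which act on disjoint factors and hence commute past them, so the identities
  for words follow by induction.
*)

definition whisk :: "'g list \<Rightarrow> ('o, 'g) hterm \<Rightarrow> 'g list \<Rightarrow> ('o, 'g) hterm" where
  "whisk A t B = HTens (HTens (HId A) t) (HId B)"

locale free_hopf_category =
  fixes G :: "('o, 'g) groupoid"
  assumes groupoid: "is_groupoid G"
begin

abbreviation Mor :: "'g set" where
  "Mor \<equiv> gMor G"

lemma gsrc_gtgt_in_Ob [simp]: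
  "g \<in> Mor \<Longrightarrow> gsrc G g \<in> gOb G"
  "g \<in> Mor \<Longrightarrow> gtgt G g \<in> gOb G"
  using groupoid unfolding is_groupoid_def by auto

lemma gidn_simps [simp]:
  "i \<in> gOb G \<Longrightarrow> gidn G i \<in> Mor"
  "i \<in> gOb G \<Longrightarrow> gsrc G (gidn G i) = i"
  "i \<in> gOb G \<Longrightarrow> gtgt G (gidn G i) = i"
  using groupoid unfolding is_groupoid_def by auto

lemma gcmp_simps [simp]:
  assumes "g \<in> Mor" "h \<in> Mor" "gtgt G g = gsrc G h"
  shows "gcmp G g h \<in> Mor" "gsrc G (gcmp G g h) = gsrc G g" "gtgt G (gcmp G g h) = gtgt G h"
  using groupoid assms unfolding is_groupoid_def by auto

lemma ginv_simps [simp]: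
  assumes "g \<in> Mor"
  shows "ginv G g \<in> Mor" "gsrc G (ginv G g) = gtgt G g" "gtgt G (ginv G g) = gsrc G g"
    "gcmp G g (ginv G g) = gidn G (gsrc G g)" "gcmp G (ginv G g) g = gidn G (gtgt G g)"
  using groupoid assms unfolding is_groupoid_def by auto

lemma gcmp_gidn [simp]:
  "g \<in> Mor \<Longrightarrow> gcmp G (gidn G (gsrc G g)) g = g"
  "g \<in> Mor \<Longrightarrow> gcmp G g (gidn G (gtgt G g)) = g"
  using groupoid unfolding is_groupoid_def by auto

lemma gcmp_assoc:
  "\<lbrakk>g \<in> Mor; h \<in> Mor; k \<in> Mor; gtgt G g = gsrc G h; gtgt G h = gsrc G k\<rbrakk> \<Longrightarrow>
    gcmp G (gcmp G g h) k = gcmp G g (gcmp G h k)"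
  using groupoid unfolding is_groupoid_def by blast

lemma gcmp_gidn_gidn [simp]: "i \<in> gOb G \<Longrightarrow> gcmp G (gidn G i) (gidn G i) = gidn G i"
  using gcmp_gidn(1)[of "gidn G i"] by simp

lemma ginv_gidn [simp]: "i \<in> gOb G \<Longrightarrow> ginv G (gidn G i) = gidn G i"
  using ginv_simps(4)[of "gidn G i"] gcmp_gidn(1)[of "ginv G (gidn G i)"] by simp

lemma hwt_dom_cod_Mor:
  "hwt G f \<Longrightarrow> set (hdom G f) \<subseteq> Mor \<and> set (hcod G f) \<subseteq> Mor"
  by (induction f) auto

lemma hwt_dom_cod_MorD [simp]:
  "hwt G f \<Longrightarrow> x \<in> set (hdom G f) \<Longrightarrow> x \<in> Mor"
  "hwt G f \<Longrightarrow> x \<in> set (hcod G f) \<Longrightarrow> x \<in> Mor"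
  using hwt_dom_cod_Mor by auto

lemma heq_hwtD:
  assumes "heq G f g"
  shows "hwt G f" "hwt G g" "hdom G f = hdom G g" "hcod G f = hcod G g"
proof -
  from assms have "hwt G f \<and> hwt G g \<and> hdom G f = hdom G g \<and> hcod G f = hcod G g"
    by (induction rule: heq.induct) (auto simp: gcmp_assoc)
  then show "hwt G f" "hwt G g" "hdom G f = hdom G g" "hcod G f = hcod G g"
    by auto
qed

declare heq.trans [trans]

lemma heq_tens_cong1: "heq G f f' \<Longrightarrow> hwt G g \<Longrightarrow> heq G (HTens f g) (HTens f' g)"
  by (rule heq.tens_cong, assumption, rule heq.refl)

lemma heq_tens_cong2: "hwt G f \<Longrightarrow> heq G g g' \<Longrightarrow> heq G (HTens f g) (HTens f g')"
  by (rule heq.tens_cong, rule heq.refl)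

lemma heq_comp_cong1:
  "heq G f f' \<Longrightarrow> hwt G g \<Longrightarrow> hcod G g = hdom G f \<Longrightarrow> heq G (HComp f g) (HComp f' g)"
  by (rule heq.comp_cong, assumption, rule heq.refl)

lemma heq_comp_cong2:
  "hwt G f \<Longrightarrow> heq G g g' \<Longrightarrow> hcod G g = hdom G f \<Longrightarrow> heq G (HComp f g) (HComp f g')"
  by (rule heq.comp_cong, rule heq.refl)

lemma hwt_whisk [simp]:
  "hwt G (whisk A t B) \<longleftrightarrow> set A \<subseteq> Mor \<and> hwt G t \<and> set B \<subseteq> Mor"
  "hdom G (whisk A t B) = A @ hdom G t @ B"
  "hcod G (whisk A t B) = A @ hcod G t @ B"
  by (auto simp: whisk_def)

lemma whisk_cong:
  "heq G t t' \<Longrightarrow> set A \<subseteq> Mor \<Longrightarrow> set B \<subseteq> Mor \<Longrightarrow> heq G (whisk A t B) (whisk A t' B)"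
  unfolding whisk_def by (intro heq_tens_cong1 heq_tens_cong2) auto

lemma whisk_HComp:
  assumes "hwt G a" "hwt G b" "hcod G b = hdom G a" "set A \<subseteq> Mor" "set B \<subseteq> Mor"
  shows "heq G (HComp (whisk A a B) (whisk A b B)) (whisk A (HComp a b) B)"
proof -
  have "heq G (HComp (whisk A a B) (whisk A b B))
      (HTens (HComp (HTens (HId A) a) (HTens (HId A) b)) (HComp (HId B) (HId B)))"
    unfolding whisk_def using assms by (intro heq.interchange) auto
  also have "heq G \<dots> (HTens (HTens (HComp (HId A) (HId A)) (HComp a b)) (HId B))"
    using assms
    by (intro heq.tens_cong heq.interchange) (auto intro: heq.id_left[where f = "HId B", simplified])
  also have "heq G \<dots> (HTens (HTens (HId A) (HComp a b)) (HId B))"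
    using assms by (intro heq_tens_cong1 heq.refl) (auto intro: heq.id_left[where f = "HId A", simplified])
  finally show ?thesis unfolding whisk_def .
qed

lemma HTens_decomp:
  assumes "hwt G a" "hwt G b"
  shows "heq G (HComp (HTens a (HId (hcod G b))) (HTens (HId (hdom G a)) b)) (HTens a b)"
proof -
  have "heq G (HComp (HTens a (HId (hcod G b))) (HTens (HId (hdom G a)) b))
      (HTens (HComp a (HId (hdom G a))) (HComp (HId (hcod G b)) b))"
    using assms hwt_dom_cod_Mor by (intro heq.interchange) auto
  also have "heq G \<dots> (HTens a b)"
    using assms by (intro heq.tens_cong heq.id_left heq.id_right)
  finally show ?thesis .
qed

lemma HTens_decomp':
  assumes "hwt G a" "hwt G b"
  shows "heq G (HComp (HTens (HId (hcod G a)) b) (HTens a (HId (hdom G b)))) (HTens a b)"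
proof -
  have "heq G (HComp (HTens (HId (hcod G a)) b) (HTens a (HId (hdom G b))))
      (HTens (HComp (HId (hcod G a)) a) (HComp b (HId (hdom G b))))"
    using assms hwt_dom_cod_Mor by (intro heq.interchange) auto
  also have "heq G \<dots> (HTens a b)"
    using assms by (intro heq.tens_cong heq.id_left heq.id_right)
  finally show ?thesis .
qed

lemma whisk_HTens_HId:
  assumes "hwt G a" "set A \<subseteq> Mor" "set M \<subseteq> Mor" "set B \<subseteq> Mor"
  shows "heq G (whisk A (HTens a (HId M)) B) (whisk A a (M @ B))"
proof -
  have "heq G (whisk A (HTens a (HId M)) B) (HTens (HTens (HTens (HId A) a) (HId M)) (HId B))"
    unfolding whisk_def using assms by (intro heq_tens_cong1 heq.sym[OF heq.tens_assoc]) auto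
  also have "heq G \<dots> (HTens (HTens (HId A) a) (HTens (HId M) (HId B)))"
    using assms by (intro heq.tens_assoc) auto
  also have "heq G \<dots> (whisk A a (M @ B))"
    unfolding whisk_def using assms by (intro heq_tens_cong2 heq.tens_id) auto
  finally show ?thesis .
qed

lemma whisk_HId_HTens:
  assumes "hwt G b" "set A \<subseteq> Mor" "set N \<subseteq> Mor" "set B \<subseteq> Mor"
  shows "heq G (whisk A (HTens (HId N) b) B) (whisk (A @ N) b B)"
proof -
  have "heq G (whisk A (HTens (HId N) b) B) (HTens (HTens (HTens (HId A) (HId N)) b) (HId B))"
    unfolding whisk_def using assms by (intro heq_tens_cong1 heq.sym[OF heq.tens_assoc]) auto
  also have "heq G \<dots> (whisk (A @ N) b B)"
    unfolding whisk_def using assms by (intro heq_tens_cong1 heq.tens_id) auto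
  finally show ?thesis .
qed

lemma whisk_Nil: "hwt G t \<Longrightarrow> heq G (whisk [] t []) t"
  unfolding whisk_def
  by (rule heq.trans[OF heq_tens_cong1[OF heq.tens_unit_left] heq.tens_unit_right]) auto

lemma whisk_HId:
  assumes "set A \<subseteq> Mor" "set M \<subseteq> Mor" "set B \<subseteq> Mor"
  shows "heq G (whisk A (HId M) B) (HId (A @ M @ B))"
proof -
  have "heq G (whisk A (HId M) B) (HTens (HId (A @ M)) (HId B))"
    unfolding whisk_def using assms by (intro heq_tens_cong1 heq.tens_id) auto
  also have "heq G \<dots> (HId ((A @ M) @ B))"
    using assms by (intro heq.tens_id) auto
  finally show ?thesis by simp
qed

section \<open>Morphisms acting on classes of terms\<close>

(* Morphisms of H(G) are the classes hcls t. A term P acts on a set X of terms by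
   post-composition, and act A t B is the action of id_A \<diamond> t \<diamond> id_B, so a nested act is
   a composite read from the inside out. An ill-typed P acts as the empty set, so act_heq
   needs no typing hypotheses. *)

definition hcls :: "('o, 'g) hterm \<Rightarrow> ('o, 'g) hterm set" where
  "hcls t = Collect (heq G t)"

definition post :: "('o, 'g) hterm \<Rightarrow> ('o, 'g) hterm set \<Rightarrow> ('o, 'g) hterm set" where
  "post P X = {h. \<exists>x\<in>X. heq G (HComp P x) h}"

definition act ::
    "'g list \<Rightarrow> ('o, 'g) hterm \<Rightarrow> 'g list \<Rightarrow> ('o, 'g) hterm set \<Rightarrow> ('o, 'g) hterm set" where
  "act A t B X = post (whisk A t B) X"

lemma heq_if_hcls_eq:
  assumes "hcls a = hcls b" "hwt G a"
  shows "heq G a b"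
proof -
  have "a \<in> hcls a" using heq.refl[OF assms(2)] unfolding hcls_def by simp
  then have "a \<in> hcls b" using assms(1) by simp
  then have "heq G b a" unfolding hcls_def by simp
  then show ?thesis by (rule heq.sym)
qed

lemma hcls_heq: "heq G a b \<Longrightarrow> hcls a = hcls b"
  unfolding hcls_def by (auto intro: heq.trans heq.sym)

lemma post_hcls: "post P (hcls x) = hcls (HComp P x)"
proof (intro equalityI subsetI)
  fix h assume "h \<in> post P (hcls x)"
  then obtain x' where x': "heq G x x'" and h: "heq G (HComp P x') h"
    unfolding post_def hcls_def by blast
  have "heq G (HComp P x) (HComp P x')"
    using x' heq_hwtD[OF x'] heq_hwtD(1)[OF h] by (intro heq_comp_cong2) auto
  then show "h \<in> hcls (HComp P x)"
    using h unfolding hcls_def by (auto intro: heq.trans)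
next
  fix h assume "h \<in> hcls (HComp P x)"
  then have h: "heq G (HComp P x) h" unfolding hcls_def by simp
  then have "hwt G x" using heq_hwtD(1) by fastforce
  then have "x \<in> hcls x" unfolding hcls_def by (simp add: heq.refl)
  with h show "h \<in> post P (hcls x)" unfolding post_def by blast
qed

lemma post_post: "post P (post Q X) = post (HComp P Q) X"
proof (intro equalityI subsetI)
  fix h assume "h \<in> post P (post Q X)"
  then obtain x y where "x \<in> X" and y: "heq G (HComp Q x) y" and h: "heq G (HComp P y) h"
    unfolding post_def by blast
  have "heq G (HComp (HComp P Q) x) (HComp P (HComp Q x))"
    using heq_hwtD[OF y] heq_hwtD(1)[OF h] by (intro heq.comp_assoc) auto
  also have "heq G \<dots> (HComp P y)"
    using y heq_hwtD[OF y] heq_hwtD(1)[OF h] by (intro heq_comp_cong2) auto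
  finally have "heq G (HComp (HComp P Q) x) h" using h by (rule heq.trans)
  then show "h \<in> post (HComp P Q) X"
    using \<open>x \<in> X\<close> unfolding post_def by auto
next
  fix h assume "h \<in> post (HComp P Q) X"
  then obtain x where "x \<in> X" and h: "heq G (HComp (HComp P Q) x) h"
    unfolding post_def by blast
  have wt: "hwt G P" "hwt G Q" "hwt G x" "hcod G x = hdom G Q" "hcod G Q = hdom G P"
    using heq_hwtD(1)[OF h] by auto
  have "heq G (HComp P (HComp Q x)) h"
    using heq.trans[OF heq.sym[OF heq.comp_assoc[OF wt(1-3) wt(4-5)]] h] .
  moreover have "HComp Q x \<in> post Q X"
    using \<open>x \<in> X\<close> wt heq.refl[of G "HComp Q x"] unfolding post_def by auto
  ultimately show "h \<in> post P (post Q X)"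
    unfolding post_def[of P] by blast
qed

lemma post_not_hwt: "\<not> hwt G P \<Longrightarrow> post P X = {}"
  unfolding post_def using heq_hwtD(1) by fastforce

lemma post_heq_subset:
  assumes PQ: "heq G P Q"
  shows "post P X \<subseteq> post Q X"
proof
  fix h assume "h \<in> post P X"
  then obtain x where "x \<in> X" and h: "heq G (HComp P x) h"
    unfolding post_def by blast
  have "heq G (HComp Q x) (HComp P x)"
    using heq.sym[OF PQ] heq_hwtD[OF PQ] heq_hwtD(1)[OF h] by (intro heq_comp_cong1) auto
  then have "heq G (HComp Q x) h" using h by (rule heq.trans)
  then show "h \<in> post Q X"
    using \<open>x \<in> X\<close> unfolding post_def by auto
qed

lemma post_heq: "heq G P Q \<Longrightarrow> post P X = post Q X"
  by (metis equalityI heq.sym post_heq_subset)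

lemma act_heq:
  assumes "heq G a b"
  shows "act A a B X = act A b B X"
proof (cases "set A \<subseteq> Mor \<and> set B \<subseteq> Mor")
  case True
  then show ?thesis
    unfolding act_def using assms by (intro post_heq whisk_cong) auto
next
  case False
  then show ?thesis
    unfolding act_def by (simp add: post_not_hwt)
qed

lemma act_HComp:
  "\<lbrakk>hwt G a; hwt G b; hcod G b = hdom G a; set A \<subseteq> Mor; set B \<subseteq> Mor\<rbrakk> \<Longrightarrow>
    act A (HComp a b) B X = act A a B (act A b B X)"
  unfolding act_def post_post by (intro post_heq heq.sym[OF whisk_HComp])

lemma act_HTens:
  assumes "hwt G a" "hwt G b" "set A \<subseteq> Mor" "set B \<subseteq> Mor"
  shows "act A (HTens a b) B X = act A a (hcod G b @ B) (act (A @ hdom G a) b B X)"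
proof -
  have "heq G (whisk A (HTens a b) B)
      (whisk A (HComp (HTens a (HId (hcod G b))) (HTens (HId (hdom G a)) b)) B)"
    using assms by (intro whisk_cong heq.sym[OF HTens_decomp]) auto
  also have "heq G \<dots>
      (HComp (whisk A (HTens a (HId (hcod G b))) B) (whisk A (HTens (HId (hdom G a)) b) B))"
    using assms hwt_dom_cod_Mor by (intro heq.sym[OF whisk_HComp]) auto
  also have "heq G \<dots> (HComp (whisk A a (hcod G b @ B)) (whisk (A @ hdom G a) b B))"
    using assms hwt_dom_cod_Mor by (intro heq.comp_cong whisk_HTens_HId whisk_HId_HTens) auto
  finally show ?thesis unfolding act_def post_post by (rule post_heq)
qed

lemma act_HTens':
  assumes "hwt G a" "hwt G b" "set A \<subseteq> Mor" "set B \<subseteq> Mor"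
  shows "act A (HTens a b) B X = act (A @ hcod G a) b B (act A a (hdom G b @ B) X)"
proof -
  have "heq G (whisk A (HTens a b) B)
      (whisk A (HComp (HTens (HId (hcod G a)) b) (HTens a (HId (hdom G b)))) B)"
    using assms by (intro whisk_cong heq.sym[OF HTens_decomp']) auto
  also have "heq G \<dots>
      (HComp (whisk A (HTens (HId (hcod G a)) b) B) (whisk A (HTens a (HId (hdom G b))) B))"
    using assms hwt_dom_cod_Mor by (intro heq.sym[OF whisk_HComp]) auto
  also have "heq G \<dots> (HComp (whisk (A @ hcod G a) b B) (whisk A a (hdom G b @ B)))"
    using assms hwt_dom_cod_Mor by (intro heq.comp_cong whisk_HTens_HId whisk_HId_HTens) auto
  finally show ?thesis unfolding act_def post_post by (rule post_heq)
qed

lemma act_commute: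
  assumes "hwt G f" "hwt G g" "set A \<subseteq> Mor" "set M \<subseteq> Mor" "set B \<subseteq> Mor"
  shows "act A f (M @ hcod G g @ B) (act (A @ hdom G f @ M) g B X) =
         act (A @ hcod G f @ M) g B (act A f (M @ hdom G g @ B) X)"
proof -
  have "heq G (whisk (A @ hdom G f) (HTens (HId M) g) B) (whisk (A @ hdom G f @ M) g B)"
    using whisk_HId_HTens[of g "A @ hdom G f" M B] assms hwt_dom_cod_Mor by simp
  then have "act A f (M @ hcod G g @ B) (act (A @ hdom G f @ M) g B X) =
      act A f (M @ hcod G g @ B) (act (A @ hdom G f) (HTens (HId M) g) B X)"
    unfolding act_def by (simp add: post_heq heq.sym)
  also have "\<dots> = act A (HTens f (HTens (HId M) g)) B X"
    using assms by (subst act_HTens) auto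
  also have "\<dots> = act A (HTens (HTens f (HId M)) g) B X"
    using assms hwt_dom_cod_Mor unfolding act_def
    by (intro post_heq whisk_cong heq.sym[OF heq.tens_assoc]) auto
  also have "\<dots> = act (A @ hcod G f @ M) g B (act A (HTens f (HId M)) (hdom G g @ B) X)"
    using assms by (subst act_HTens') auto
  also have "\<dots> = act (A @ hcod G f @ M) g B (act A f (M @ hdom G g @ B) X)"
    using assms hwt_dom_cod_Mor unfolding act_def
    by (intro arg_cong[where f = "post _"] post_heq whisk_HTens_HId) auto
  finally show ?thesis .
qed

lemma act_HId_left:
  assumes "A @ M @ B = A' @ hcod G t @ B'" "hwt G t" "set A' \<subseteq> Mor" "set B' \<subseteq> Mor"
  shows "act A (HId M) B (act A' t B' X) = act A' t B' X"
proof -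
  have Mor: "set A \<subseteq> Mor" "set M \<subseteq> Mor" "set B \<subseteq> Mor"
    using assms hwt_dom_cod_Mor by (metis le_sup_iff set_append)+
  have "heq G (HComp (whisk A (HId M) B) (whisk A' t B')) (HComp (HId (A @ M @ B)) (whisk A' t B'))"
    using Mor assms by (intro heq_comp_cong1 whisk_HId) auto
  also have "heq G \<dots> (whisk A' t B')"
    unfolding assms(1) using assms heq.id_left[of G "whisk A' t B'"] by simp
  finally show ?thesis unfolding act_def post_post by (rule post_heq)
qed

lemma act_HId_right:
  assumes "A' @ M @ B' = A @ hdom G t @ B" "hwt G t" "set A \<subseteq> Mor" "set B \<subseteq> Mor"
  shows "act A t B (act A' (HId M) B' X) = act A t B X"
proof -
  have Mor: "set A' \<subseteq> Mor" "set M \<subseteq> Mor" "set B' \<subseteq> Mor"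
    using assms hwt_dom_cod_Mor by (metis le_sup_iff set_append)+
  have "heq G (HComp (whisk A t B) (whisk A' (HId M) B')) (HComp (whisk A t B) (HId (A' @ M @ B')))"
    using Mor assms by (intro heq_comp_cong2 whisk_HId) auto
  also have "heq G \<dots> (whisk A t B)"
    unfolding assms(1) using assms heq.id_right[of G "whisk A t B"] by simp
  finally show ?thesis unfolding act_def post_post by (rule post_heq)
qed

lemma act_HId_eq:
  assumes "A @ M @ B = A' @ M' @ B'" "set (A @ M @ B) \<subseteq> Mor"
  shows "act A (HId M) B X = act A' (HId M') B' X"
proof -
  have "heq G (whisk A (HId M) B) (HId (A @ M @ B))"
    using assms(2) by (intro whisk_HId) auto
  moreover have "heq G (whisk A' (HId M') B') (HId (A' @ M' @ B'))"
    using assms(2) unfolding assms(1) by (intro whisk_HId) auto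
  ultimately have "heq G (whisk A (HId M) B) (whisk A' (HId M') B')"
    unfolding assms(1) by (blast intro: heq.trans heq.sym)
  then show ?thesis unfolding act_def by (rule post_heq)
qed

lemma act_HId_hcls:
  assumes "N = A @ M @ B" "set N \<subseteq> Mor"
  shows "act A (HId M) B (hcls (HId N)) = hcls (HId N)"
proof -
  have "heq G (HComp (whisk A (HId M) B) (HId N)) (HComp (HId N) (HId N))"
    using assms(2) unfolding assms(1) by (intro heq_comp_cong1 whisk_HId) auto
  also have "heq G \<dots> (HId N)"
    using assms heq.id_left[of G "HId N"] by simp
  finally show ?thesis unfolding act_def post_hcls by (rule hcls_heq)
qed

lemma heq_HId_if_act_fixes:
  assumes "hwt G t" "hdom G t = N" "act [] t [] (hcls (HId N)) = hcls (HId N)"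
  shows "heq G t (HId N)"
proof -
  have "heq G (HComp (whisk [] t []) (HId N)) (HComp t (HId N))"
    using assms by (intro heq_comp_cong1 whisk_Nil) auto
  also have "heq G \<dots> t"
    using assms heq.id_right[of G t] by simp
  finally have "act [] t [] (hcls (HId N)) = hcls t"
    unfolding act_def post_hcls by (rule hcls_heq)
  then show ?thesis
    using assms heq_if_hcls_eq by simp
qed

section \<open>The axioms of H(G) as rewrite rules\<close>

lemmas act_unfold = act_HComp act_HTens act_HId_left act_HId_right

lemma act_counit_left:
  "\<lbrakk>g \<in> Mor; set A \<subseteq> Mor; set B \<subseteq> Mor\<rbrakk> \<Longrightarrow>
    act A (HEps g) (g # B) (act A (HDelta g) B X) = act A (HId [g]) B X"
  using act_heq[OF heq.counit_left, of g A B X] by (simp add: act_unfold)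

lemma act_counit_right:
  "\<lbrakk>g \<in> Mor; set A \<subseteq> Mor; set B \<subseteq> Mor\<rbrakk> \<Longrightarrow>
    act (A @ [g]) (HEps g) B (act A (HDelta g) B X) = act A (HId [g]) B X"
  using act_heq[OF heq.counit_right, of g A B X] by (simp add: act_unfold)

lemma act_coassoc:
  "\<lbrakk>g \<in> Mor; set A \<subseteq> Mor; set B \<subseteq> Mor\<rbrakk> \<Longrightarrow>
    act A (HDelta g) (g # B) (act A (HDelta g) B X) = act (A @ [g]) (HDelta g) B (act A (HDelta g) B X)"
  using act_heq[OF heq.coassoc, of g A B X] by (simp add: act_unfold)

lemma act_massoc:
  "\<lbrakk>g \<in> Mor; h \<in> Mor; k \<in> Mor; gtgt G g = gsrc G h; gtgt G h = gsrc G k;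
    set A \<subseteq> Mor; set B \<subseteq> Mor\<rbrakk> \<Longrightarrow>
    act A (HMult (gcmp G g h) k) B (act A (HMult g h) (k # B) X) =
    act A (HMult g (gcmp G h k)) B (act (A @ [g]) (HMult h k) B X)"
  using act_heq[OF heq.massoc, of g h k A B X] by (simp add: act_unfold)

lemma act_unit_left:
  "\<lbrakk>g \<in> Mor; set A \<subseteq> Mor; set B \<subseteq> Mor\<rbrakk> \<Longrightarrow>
    act A (HMult (gidn G (gsrc G g)) g) B (act A (HUnit (gsrc G g)) (g # B) X) = act A (HId [g]) B X"
  using act_heq[OF heq.unit_left, of g A B X] by (simp add: act_unfold)

lemma act_unit_right:
  "\<lbrakk>g \<in> Mor; set A \<subseteq> Mor; set B \<subseteq> Mor\<rbrakk> \<Longrightarrow>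
    act A (HMult g (gidn G (gtgt G g))) B (act (A @ [g]) (HUnit (gtgt G g)) B X) = act A (HId [g]) B X"
  using act_heq[OF heq.unit_right, of g A B X] by (simp add: act_unfold)

lemma act_bialg_delta_mult:
  "\<lbrakk>g \<in> Mor; h \<in> Mor; gtgt G g = gsrc G h; set A \<subseteq> Mor; set B \<subseteq> Mor\<rbrakk> \<Longrightarrow>
    act A (HDelta (gcmp G g h)) B (act A (HMult g h) B X) =
    act A (HMult g h) (gcmp G g h # B) (act (A @ [g, h]) (HMult g h) B
      (act (A @ [g]) (HBr [g] [h]) (h # B) (act A (HDelta g) (h # h # B) (act (A @ [g]) (HDelta h) B X))))"
  using act_heq[OF heq.bialg_delta_mult, of g h A B X] by (simp add: act_unfold)

lemma act_bialg_eps_mult: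
  "\<lbrakk>g \<in> Mor; h \<in> Mor; gtgt G g = gsrc G h; set A \<subseteq> Mor; set B \<subseteq> Mor\<rbrakk> \<Longrightarrow>
    act A (HEps (gcmp G g h)) B (act A (HMult g h) B X) = act A (HEps g) B (act (A @ [g]) (HEps h) B X)"
  using act_heq[OF heq.bialg_eps_mult, of g h A B X] by (simp add: act_unfold)

lemma act_bialg_delta_unit:
  "\<lbrakk>i \<in> gOb G; set A \<subseteq> Mor; set B \<subseteq> Mor\<rbrakk> \<Longrightarrow>
    act A (HDelta (gidn G i)) B (act A (HUnit i) B X) =
    act A (HUnit i) (gidn G i # B) (act A (HUnit i) B X)"
  using act_heq[OF heq.bialg_delta_unit, of i A B X] by (simp add: act_unfold)

lemma act_antipode_left:
  "\<lbrakk>g \<in> Mor; set A \<subseteq> Mor; set B \<subseteq> Mor\<rbrakk> \<Longrightarrow>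
    act A (HMult (ginv G g) g) B (act A (HS g) (g # B) (act A (HDelta g) B X)) =
    act A (HUnit (gtgt G g)) B (act A (HEps g) B X)"
  using act_heq[OF heq.antipode_left, of g A B X] by (simp add: act_unfold)

lemma act_antipode_right:
  "\<lbrakk>g \<in> Mor; set A \<subseteq> Mor; set B \<subseteq> Mor\<rbrakk> \<Longrightarrow>
    act A (HMult g (ginv G g)) B (act (A @ [g]) (HS g) B (act A (HDelta g) B X)) =
    act A (HUnit (gsrc G g)) B (act A (HEps g) B X)"
  using act_heq[OF heq.antipode_right, of g A B X] by (simp add: act_unfold)

lemma act_cointegral:
  "\<lbrakk>i \<in> gOb G; set A \<subseteq> Mor; set B \<subseteq> Mor\<rbrakk> \<Longrightarrow>
    act (A @ [gidn G i]) (Hcoint i) B (act A (HDelta (gidn G i)) B X) =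
    act A (HUnit i) B (act A (Hcoint i) B X)"
  using act_heq[OF heq.cointegral, of i A B X] by (simp add: act_unfold)

lemma act_integral:
  "\<lbrakk>g \<in> Mor; h \<in> Mor; gtgt G g = gsrc G h; set A \<subseteq> Mor; set B \<subseteq> Mor\<rbrakk> \<Longrightarrow>
    act A (HMult g h) B (act A (Hint g) (h # B) X) = act A (Hint (gcmp G g h)) B (act A (HEps h) B X)"
  using act_heq[OF heq.integral, of g h A B X] by (simp add: act_unfold)

lemma act_normal1:
  "\<lbrakk>i \<in> gOb G; set A \<subseteq> Mor; set B \<subseteq> Mor\<rbrakk> \<Longrightarrow>
    act A (Hcoint i) B (act A (Hint (gidn G i)) B X) = act A (HId []) B X"
  using act_heq[OF heq.normal1, of i A B X] by (simp add: act_unfold)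

lemma act_normal2:
  "\<lbrakk>i \<in> gOb G; set A \<subseteq> Mor; set B \<subseteq> Mor\<rbrakk> \<Longrightarrow>
    act A (Hcoint i) B (act A (HS (gidn G i)) B (act A (Hint (gidn G i)) B X)) = act A (HId []) B X"
  using act_heq[OF heq.normal2, of i A B X] by (simp add: act_unfold)

lemma act_br_hex1:
  "\<lbrakk>set A \<subseteq> Mor; set B \<subseteq> Mor; set C \<subseteq> Mor; set P \<subseteq> Mor; set Q \<subseteq> Mor\<rbrakk> \<Longrightarrow>
    act P (HBr A (B @ C)) Q X = act (P @ B) (HBr A C) Q (act P (HBr A B) (C @ Q) X)"
  using act_heq[OF heq.br_hex1, of A B C P Q X] by (simp add: act_unfold)

lemma act_br_hex2:
  "\<lbrakk>set A \<subseteq> Mor; set B \<subseteq> Mor; set C \<subseteq> Mor; set P \<subseteq> Mor; set Q \<subseteq> Mor\<rbrakk> \<Longrightarrow>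
    act P (HBr (A @ B) C) Q X = act P (HBr A C) (B @ Q) (act (P @ A) (HBr B C) Q X)"
  using act_heq[OF heq.br_hex2, of A B C P Q X] by (simp add: act_unfold)

lemma act_br_inv2:
  "\<lbrakk>set A \<subseteq> Mor; set B \<subseteq> Mor; set P \<subseteq> Mor; set Q \<subseteq> Mor\<rbrakk> \<Longrightarrow>
    act P (HBr A B) Q (act P (HBrI A B) Q X) = act P (HId (B @ A)) Q X"
  using act_heq[OF heq.br_inv2, of A B P Q X] by (simp add: act_unfold)

lemma act_br_natural:
  "\<lbrakk>hwt G f; hwt G g; set P \<subseteq> Mor; set Q \<subseteq> Mor\<rbrakk> \<Longrightarrow>
    act P (HBr (hcod G f) (hcod G g)) Q (act P (HTens f g) Q X) =
    act P (HTens g f) Q (act P (HBr (hdom G f) (hdom G g)) Q X)"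
  using act_heq[OF heq.br_natural, of f g P Q X] hwt_dom_cod_Mor by (simp add: act_unfold)

lemma act_HBr_Nil_left:
  assumes "set C \<subseteq> Mor" "set P \<subseteq> Mor" "set Q \<subseteq> Mor"
  shows "act P (HBr [] C) Q X = act P (HId C) Q X"
proof -
  have "act P (HBr [] C) Q X = act P (HBr [] C) Q (act P (HBr [] C) Q (act P (HBrI [] C) Q X))"
    using assms by (simp add: act_br_inv2 act_HId_right)
  also have "\<dots> = act P (HBr [] C) Q (act P (HBrI [] C) Q X)"
    using assms act_br_hex2[of "[]" "[]" C P Q] by simp
  also have "\<dots> = act P (HId C) Q X"
    using assms by (simp add: act_br_inv2)
  finally show ?thesis .
qed

lemma act_HBr_Nil_right:
  assumes "set C \<subseteq> Mor" "set P \<subseteq> Mor" "set Q \<subseteq> Mor"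
  shows "act P (HBr C []) Q X = act P (HId C) Q X"
proof -
  have "act P (HBr C []) Q X = act P (HBr C []) Q (act P (HBr C []) Q (act P (HBrI C []) Q X))"
    using assms by (simp add: act_br_inv2 act_HId_right)
  also have "\<dots> = act P (HBr C []) Q (act P (HBrI C []) Q X)"
    using assms act_br_hex1[of C "[]" "[]" P Q] by simp
  also have "\<dots> = act P (HId C) Q X"
    using assms by (simp add: act_br_inv2)
  finally show ?thesis .
qed

lemma act_HBr_Hint:
  "\<lbrakk>i \<in> gOb G; h \<in> Mor; set A \<subseteq> Mor; set B \<subseteq> Mor\<rbrakk> \<Longrightarrow>
    act A (HBr [gidn G i] [h]) B (act A (Hint (gidn G i)) (h # B) X) = act (A @ [h]) (Hint (gidn G i)) B X"
  using act_br_natural[of "Hint (gidn G i)" "HId [h]" A B X] by (simp add: act_unfold act_HBr_Nil_left)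

lemma act_HBr_Hcoint:
  "\<lbrakk>i \<in> gOb G; h \<in> Mor; set A \<subseteq> Mor; set B \<subseteq> Mor\<rbrakk> \<Longrightarrow>
    act (A @ [h]) (Hcoint i) B (act A (HBr [gidn G i] [h]) B X) = act A (Hcoint i) (h # B) X"
  using act_br_natural[of "Hcoint i" "HId [h]" A B X] by (simp add: act_unfold act_HBr_Nil_left)

lemma act_HBr_HEps:
  "\<lbrakk>a \<in> Mor; h \<in> Mor; set A \<subseteq> Mor; set B \<subseteq> Mor\<rbrakk> \<Longrightarrow>
    act A (HEps h) (a # B) (act A (HBr [a] [h]) B X) = act (A @ [a]) (HEps h) B X"
  using act_br_natural[of "HId [a]" "HEps h" A B X] by (simp add: act_unfold act_HBr_Nil_right)

lemma act_HBr_HDelta_left: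
  "\<lbrakk>i \<in> gOb G; h \<in> Mor; set A \<subseteq> Mor; set B \<subseteq> Mor\<rbrakk> \<Longrightarrow>
    act (A @ [h]) (HDelta (gidn G i)) B (act A (HBr [gidn G i] [h]) B X) =
    act A (HBr [gidn G i] [h]) (gidn G i # B)
      (act (A @ [gidn G i]) (HBr [gidn G i] [h]) B (act A (HDelta (gidn G i)) (h # B) X))"
  using act_br_natural[of "HDelta (gidn G i)" "HId [h]" A B X]
    act_br_hex2[of "[gidn G i]" "[gidn G i]" "[h]" A B]
  by (simp add: act_unfold)

lemma act_HBr_HDelta_right:
  "\<lbrakk>a \<in> Mor; g \<in> Mor; set A \<subseteq> Mor; set B \<subseteq> Mor\<rbrakk> \<Longrightarrow>
    act (A @ [g]) (HBr [a] [g]) B (act A (HBr [a] [g]) (g # B) (act (A @ [a]) (HDelta g) B X)) =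
    act A (HDelta g) (a # B) (act A (HBr [a] [g]) B X)"
  using act_br_natural[of "HId [a]" "HDelta g" A B X] act_br_hex1[of "[a]" "[g]" "[g]" A B]
  by (simp add: act_unfold)

section \<open>Hopf algebra identities\<close>

(* Glosses below use Sweedler notation with the braiding suppressed, and e = idsrc g. *)

abbreviation idsrc :: "'g \<Rightarrow> 'g" where
  "idsrc g \<equiv> gidn G (gsrc G g)"

(* x(1) S(a x(2)) = S(a) \<epsilon>(x) for a in H_e and x in H_g *)
lemma antipode_mult_cancel:
  assumes g: "g \<in> Mor" and B: "set B \<subseteq> Mor"
  shows "act [] (HMult g (ginv G g)) B (act [g] (HS g) B (act [g] (HMult (idsrc g) g) B
           (act [] (HBr [idsrc g] [g]) (g # B) (act [idsrc g] (HDelta g) B X)))) =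
         act [idsrc g] (HEps g) B (act [] (HS (idsrc g)) (g # B) X)"
proof -
  let ?e = "idsrc g" and ?b = "ginv G g" and ?i = "gsrc G g"
  have "act [] (HMult g ?b) B (act [g] (HS g) B (act [g] (HMult ?e g) B (act [] (HBr [?e] [g]) (g # B)
      (act [?e] (HDelta g) B X)))) =
      act [] (HMult g ?b) B (act [g] (HS g) B (act [g] (HMult ?e g) B (act [] (HBr [?e] [g]) (g # B)
      (act [?e] (HDelta g) B (act [] (HEps ?e) (?e # g # B) (act [] (HDelta ?e) (g # B) X))))))"
    using g B act_counit_left[of ?e "[]" "g # B"] by (simp add: act_HId_right)
  also have "\<dots> = act [] (HMult g ?b) B (act [g] (HS g) B (act [g] (HMult ?e g) B
      (act [] (HMult ?e g) (?e # g # B) (act [] (HUnit ?i) (g # ?e # g # B)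
      (act [] (HEps ?e) (g # ?e # g # B) (act [?e] (HBr [?e] [g]) (g # B) (act [?e, ?e] (HDelta g) B
      (act [] (HDelta ?e) (g # B) X))))))))"
    using g B act_commute[of "HEps ?e" "HDelta g" "[]" "[?e]" B, symmetric]
      act_commute[of "HEps ?e" "HBr [?e] [g]" "[]" "[]" "g # B", symmetric]
      act_unit_left[of g "[]" "?e # g # B"] by (simp add: act_HId_left)
  also have "\<dots> = act [] (HMult g ?b) B (act [g] (HS g) B (act [g] (HMult ?e g) B
      (act [] (HMult ?e g) (?e # g # B) (act [] (HMult ?e ?e) (g # ?e # g # B)
      (act [] (HS ?e) (?e # g # ?e # g # B) (act [] (HDelta ?e) (g # ?e # g # B)
      (act [?e] (HBr [?e] [g]) (g # B) (act [?e, ?e] (HDelta g) B (act [] (HDelta ?e) (g # B) X)))))))))"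
    using g B act_antipode_left[of ?e "[]" "g # ?e # g # B"] by simp
  also have "\<dots> = act [] (HMult g ?b) B (act [g] (HS g) B (act [g] (HMult ?e g) B
      (act [] (HMult ?e g) (?e # g # B) (act [] (HMult ?e ?e) (g # ?e # g # B)
      (act [] (HS ?e) (?e # g # ?e # g # B) (act [?e, ?e] (HBr [?e] [g]) (g # B)
      (act [?e, ?e, ?e] (HDelta g) B (act [?e] (HDelta ?e) (g # B)
      (act [] (HDelta ?e) (g # B) X)))))))))"
    using g B act_commute[of "HDelta ?e" "HBr [?e] [g]" "[]" "[]" "g # B"]
      act_commute[of "HDelta ?e" "HDelta g" "[]" "[?e]" B]
      act_coassoc[of ?e "[]" "g # B"] by simp
  also have "\<dots> = act [] (HMult g ?b) B (act [g] (HS g) B (act [g] (HMult ?e g) B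
      (act [] (HMult ?e g) (?e # g # B) (act [?e] (HMult ?e g) (?e # g # B)
      (act [] (HS ?e) (?e # g # ?e # g # B) (act [?e, ?e] (HBr [?e] [g]) (g # B)
      (act [?e, ?e, ?e] (HDelta g) B (act [?e] (HDelta ?e) (g # B)
      (act [] (HDelta ?e) (g # B) X)))))))))"
    using g B act_massoc[of ?e ?e g "[]" "?e # g # B"] by simp
  also have "\<dots> = act [] (HMult ?e ?e) B (act [?e] (HMult g ?b) B (act [?e, g] (HS g) B
      (act [?e, g] (HMult ?e g) B (act [?e] (HMult ?e g) (?e # g # B)
      (act [] (HS ?e) (?e # g # ?e # g # B) (act [?e, ?e] (HBr [?e] [g]) (g # B)
      (act [?e, ?e, ?e] (HDelta g) B (act [?e] (HDelta ?e) (g # B)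
      (act [] (HDelta ?e) (g # B) X)))))))))"
    using g B act_commute[of "HMult ?e g" "HMult ?e g" "[]" "[]" B, symmetric]
      act_commute[of "HMult ?e g" "HS g" "[]" "[]" B, symmetric]
      act_massoc[of ?e g ?b "[]" B] by simp
  also have "\<dots> = act [] (HMult ?e ?e) B (act [] (HS ?e) (?e # B) (act [?e] (HMult g ?b) B
      (act [?e, g] (HS g) B (act [?e] (HMult ?e g) (g # B) (act [?e, ?e, g] (HMult ?e g) B
      (act [?e, ?e] (HBr [?e] [g]) (g # B) (act [?e] (HDelta ?e) (g # g # B) (act [?e, ?e] (HDelta g) B
      (act [] (HDelta ?e) (g # B) X)))))))))"
    using g B act_commute[of "HS ?e" "HMult ?e g" "[]" "[]" "?e # g # B", symmetric]
      act_commute[of "HS ?e" "HMult ?e g" "[]" "[g]" B, symmetric]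
      act_commute[of "HS ?e" "HS g" "[]" "[g]" B, symmetric]
      act_commute[of "HS ?e" "HMult g ?b" "[]" "[]" B, symmetric]
      act_commute[of "HMult ?e g" "HMult ?e g" "[?e]" "[]" B, symmetric]
      act_commute[of "HDelta ?e" "HDelta g" "[?e]" "[]" B, symmetric]
    by simp
  also have "\<dots> = act [] (HMult ?e ?e) B (act [] (HS ?e) (?e # B) (act [?e] (HMult g ?b) B
      (act [?e, g] (HS g) B (act [?e] (HDelta g) B (act [?e] (HMult ?e g) B
      (act [] (HDelta ?e) (g # B) X))))))"
    using g B act_bialg_delta_mult[of ?e g "[?e]" B] by simp
  also have "\<dots> = act [] (HMult ?e ?e) B (act [] (HS ?e) (?e # B) (act [?e] (HUnit ?i) B
      (act [?e] (HEps g) B (act [?e] (HMult ?e g) B (act [] (HDelta ?e) (g # B) X)))))"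
    using g B act_antipode_right[of g "[?e]" B] by simp
  also have "\<dots> = act [] (HMult ?e ?e) B (act [] (HS ?e) (?e # B) (act [?e] (HUnit ?i) B
      (act [?e] (HEps g) B X)))"
    using g B act_bialg_eps_mult[of ?e g "[?e]" B]
      act_commute[of "HDelta ?e" "HEps g" "[]" "[]" B, symmetric] act_counit_right[of ?e "[]" B]
    by (simp add: act_HId_right)
  also have "\<dots> = act [?e] (HEps g) B (act [] (HS ?e) (g # B) X)"
    using g B act_commute[of "HS ?e" "HUnit ?i" "[]" "[]" B] act_unit_right[of ?e "[]" B]
      act_commute[of "HS ?e" "HEps g" "[]" "[]" B]
    by (simp add: act_HId_left)
  finally show ?thesis .
qed

(* S(x(1))(1) x(2) \<diamond> S(x(1))(2) = 1 \<diamond> S(x) for x in H_{1_i} *)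
lemma antipode_coproduct_cancel:
  assumes i: "i \<in> gOb G" and B: "set B \<subseteq> Mor"
  shows "act [] (HMult (gidn G i) (gidn G i)) (gidn G i # B)
           (act [gidn G i] (HBr [gidn G i] [gidn G i]) B (act [] (HDelta (gidn G i)) (gidn G i # B)
             (act [] (HS (gidn G i)) (gidn G i # B) (act [] (HDelta (gidn G i)) B X)))) =
         act [gidn G i] (HS (gidn G i)) B (act [] (HUnit i) (gidn G i # B) X)"
proof -
  let ?e = "gidn G i"
  have "act [] (HMult ?e ?e) (?e # B) (act [?e] (HBr [?e] [?e]) B (act [] (HDelta ?e) (?e # B)
      (act [] (HS ?e) (?e # B) (act [] (HDelta ?e) B X)))) =
      act [] (HMult ?e ?e) (?e # B) (act [?e] (HBr [?e] [?e]) B (act [] (HDelta ?e) (?e # B)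
      (act [] (HS ?e) (?e # B) (act [?e, ?e] (HEps ?e) B (act [?e] (HDelta ?e) B
      (act [] (HDelta ?e) B X))))))"
    using i B act_counit_right[of ?e "[?e]" B] by (simp add: act_HId_right)
  also have "\<dots> = act [?e, ?e] (HEps ?e) B (act [] (HMult ?e ?e) (?e # ?e # B)
      (act [?e] (HBr [?e] [?e]) (?e # B) (act [] (HDelta ?e) (?e # ?e # B) (act [] (HS ?e) (?e # ?e # B)
      (act [?e] (HDelta ?e) B (act [] (HDelta ?e) B X))))))"
    using i B act_commute[of "HS ?e" "HEps ?e" "[]" "[?e]" B]
      act_commute[of "HDelta ?e" "HEps ?e" "[]" "[?e]" B]
      act_commute[of "HBr [?e] [?e]" "HEps ?e" "[?e]" "[]" B]
      act_commute[of "HMult ?e ?e" "HEps ?e" "[]" "[?e]" B]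
    by simp
  also have "\<dots> = act [?e] (HMult ?e ?e) B (act [?e, ?e] (HMult ?e ?e) B
      (act [?e, ?e, ?e] (HS ?e) B (act [?e, ?e] (HDelta ?e) B (act [] (HMult ?e ?e) (?e # ?e # B)
      (act [?e] (HBr [?e] [?e]) (?e # B) (act [] (HDelta ?e) (?e # ?e # B) (act [] (HS ?e) (?e # ?e # B)
      (act [?e] (HDelta ?e) B (act [] (HDelta ?e) B X)))))))))"
    using i B act_unit_right[of ?e "[?e]" B] act_antipode_right[of ?e "[?e, ?e]" B]
    by (simp add: act_HId_left)
  also have "\<dots> = act [?e] (HMult ?e ?e) B (act [?e] (HMult ?e ?e) (?e # B)
      (act [?e, ?e, ?e] (HS ?e) B (act [?e, ?e] (HDelta ?e) B (act [] (HMult ?e ?e) (?e # ?e # B)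
      (act [?e] (HBr [?e] [?e]) (?e # B) (act [] (HDelta ?e) (?e # ?e # B) (act [] (HS ?e) (?e # ?e # B)
      (act [?e] (HDelta ?e) B (act [] (HDelta ?e) B X)))))))))"
    using i B act_massoc[of ?e ?e ?e "[?e]" B] by simp
  also have "\<dots> = act [?e] (HMult ?e ?e) B (act [?e] (HMult ?e ?e) (?e # B)
      (act [?e, ?e, ?e] (HS ?e) B (act [] (HMult ?e ?e) (?e # ?e # ?e # B)
      (act [?e] (HBr [?e] [?e]) (?e # ?e # B) (act [] (HDelta ?e) (?e # ?e # ?e # B)
      (act [] (HS ?e) (?e # ?e # ?e # B) (act [?e] (HDelta ?e) (?e # B) (act [?e] (HDelta ?e) B
      (act [] (HDelta ?e) B X)))))))))"
    using i B act_commute[of "HMult ?e ?e" "HDelta ?e" "[]" "[?e]" B, symmetric]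
      act_commute[of "HBr [?e] [?e]" "HDelta ?e" "[?e]" "[]" B, symmetric]
      act_commute[of "HDelta ?e" "HDelta ?e" "[]" "[?e]" B, symmetric]
      act_commute[of "HS ?e" "HDelta ?e" "[]" "[?e]" B, symmetric]
      act_coassoc[of ?e "[?e]" B] by simp
  also have "\<dots> = act [?e] (HMult ?e ?e) B (act [] (HMult ?e ?e) (?e # ?e # B)
      (act [?e, ?e] (HMult ?e ?e) (?e # B) (act [?e] (HBr [?e] [?e]) (?e # ?e # B)
      (act [] (HDelta ?e) (?e # ?e # ?e # B) (act [?e] (HDelta ?e) (?e # B) (act [?e, ?e] (HS ?e) B
      (act [] (HS ?e) (?e # ?e # B) (act [?e] (HDelta ?e) B (act [] (HDelta ?e) B X)))))))))"
    using i B act_commute[of "HMult ?e ?e" "HS ?e" "[]" "[?e, ?e]" B, symmetric]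
      act_commute[of "HBr [?e] [?e]" "HS ?e" "[?e]" "[?e]" B, symmetric]
      act_commute[of "HDelta ?e" "HS ?e" "[]" "[?e, ?e]" B, symmetric]
      act_commute[of "HS ?e" "HS ?e" "[]" "[?e, ?e]" B, symmetric]
      act_commute[of "HDelta ?e" "HS ?e" "[?e]" "[]" B, symmetric]
      act_commute[of "HS ?e" "HDelta ?e" "[]" "[]" "?e # B"]
      act_commute[of "HMult ?e ?e" "HMult ?e ?e" "[]" "[]" "?e # B", symmetric]
    by simp
  also have "\<dots> = act [?e] (HMult ?e ?e) B (act [] (HDelta ?e) (?e # B)
      (act [] (HMult ?e ?e) (?e # B) (act [?e, ?e] (HS ?e) B (act [] (HS ?e) (?e # ?e # B)
      (act [?e] (HDelta ?e) B (act [] (HDelta ?e) B X))))))"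
    using i B act_bialg_delta_mult[of ?e ?e "[]" "?e # B"] by simp
  also have "\<dots> = act [?e] (HMult ?e ?e) B (act [] (HDelta ?e) (?e # B) (act [] (HUnit i) (?e # B)
      (act [] (HEps ?e) (?e # B) (act [?e] (HS ?e) B (act [] (HDelta ?e) B X)))))"
    using i B act_coassoc[of ?e "[]" B, symmetric] act_commute[of "HS ?e" "HS ?e" "[]" "[?e]" B, symmetric]
      act_commute[of "HDelta ?e" "HS ?e" "[]" "[]" B, symmetric] act_antipode_left[of ?e "[]" "?e # B"]
    by simp
  also have "\<dots> = act [] (HUnit i) (?e # B) (act [] (HS ?e) B X)"
    using i B act_bialg_delta_unit[of i "[]" "?e # B"]
      act_commute[of "HUnit i" "HMult ?e ?e" "[]" "[]" B, symmetric]
      act_unit_left[of ?e "[]" B] act_commute[of "HEps ?e" "HS ?e" "[]" "[]" B]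
      act_counit_left[of ?e "[]" B]
    by (simp add: act_HId_right)
  also have "\<dots> = act [?e] (HS ?e) B (act [] (HUnit i) (?e # B) X)"
    using i B act_commute[of "HUnit i" "HS ?e" "[]" "[]" B] by simp
  finally show ?thesis .
qed

(* l_i(S(L(1))) L(2) = 1 for the integral L of H_{1_i} *)
lemma cointegral_antipode_integral:
  assumes i: "i \<in> gOb G" and B: "set B \<subseteq> Mor"
  shows "act [] (Hcoint i) (gidn G i # B) (act [] (HS (gidn G i)) (gidn G i # B)
           (act [] (HDelta (gidn G i)) B (act [] (Hint (gidn G i)) B X))) =
         act [] (HUnit i) B X"
proof -
  let ?e = "gidn G i"
  have "act [] (Hcoint i) (?e # B) (act [] (HS ?e) (?e # B) (act [] (HDelta ?e) B
      (act [] (Hint ?e) B X))) =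
      act [] (HMult ?e ?e) B (act [?e] (Hcoint i) (?e # B) (act [] (HDelta ?e) (?e # B)
      (act [] (HS ?e) (?e # B) (act [] (HDelta ?e) B (act [] (Hint ?e) B X)))))"
    using i B act_unit_left[of ?e "[]" B] act_cointegral[of i "[]" "?e # B"] by (simp add: act_HId_left)
  also have "\<dots> = act [?e] (Hcoint i) B (act [] (HMult ?e ?e) (?e # B) (act [?e] (HBr [?e] [?e]) B
      (act [] (HDelta ?e) (?e # B) (act [] (HS ?e) (?e # B) (act [] (HDelta ?e) B
      (act [] (Hint ?e) B X))))))"
    using i B act_HBr_Hcoint[of i ?e "[?e]" B, symmetric]
      act_commute[of "HMult ?e ?e" "Hcoint i" "[]" "[]" B] by simp
  also have "\<dots> = act [?e] (Hcoint i) B (act [?e] (HS ?e) B (act [] (HUnit i) (?e # B)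
      (act [] (Hint ?e) B X)))"
    using i B antipode_coproduct_cancel[OF i B] by simp
  also have "\<dots> = act [] (HUnit i) B X"
    using i B act_commute[of "HUnit i" "Hint ?e" "[]" "[]" B] act_normal2[of i "[?e]" B]
    by (simp add: act_HId_left)
  finally show ?thesis .
qed

(* L_e(1) x \<diamond> L_e(2) = L_g(1) \<diamond> L_g(2) S(x) *)
lemma integral_transfer:
  assumes g: "g \<in> Mor"
  shows "act [] (HMult (idsrc g) g) [idsrc g] (act [idsrc g] (HBr [idsrc g] [g]) []
           (act [] (HDelta (idsrc g)) [g] (act [] (Hint (idsrc g)) [g] X))) =
         act [g] (HMult g (ginv G g)) [] (act [g, g] (HS g) [] (act [] (HDelta g) [g] (act [] (Hint g) [g] X)))"
proof -
  let ?e = "idsrc g" and ?b = "ginv G g"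
  have "act [] (HMult ?e g) [?e] (act [?e] (HBr [?e] [g]) [] (act [] (HDelta ?e) [g]
      (act [] (Hint ?e) [g] X))) =
      act [] (HMult ?e g) [?e] (act [?e] (HBr [?e] [g]) [] (act [] (HDelta ?e) [g] (act [] (Hint ?e) [g]
      (act [g] (HEps g) [] (act [] (HDelta g) [] X)))))"
    using g act_counit_right[of g "[]" "[]"] by (simp add: act_HId_right)
  also have "\<dots> = act [] (HMult ?e g) [?e] (act [?e, g, ?e] (HEps g) []
      (act [?e] (HBr [?e] [g]) [g] (act [] (HDelta ?e) [g, g] (act [] (Hint ?e) [g, g]
      (act [] (HDelta g) [] X)))))"
    using g act_commute[of "Hint ?e" "HEps g" "[]" "[g]" "[]"]
      act_commute[of "HDelta ?e" "HEps g" "[]" "[g]" "[]"]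
      act_commute[of "HBr [?e] [g]" "HEps g" "[?e]" "[]" "[]"] by simp
  also have "\<dots> = act [] (HMult ?e g) [?e] (act [?e, g] (HMult ?e ?e) []
      (act [?e, g, ?e] (HMult g ?b) [] (act [?e, g, ?e, g] (HS g) [] (act [?e, g, ?e] (HDelta g) []
      (act [?e] (HBr [?e] [g]) [g] (act [] (HDelta ?e) [g, g] (act [] (Hint ?e) [g, g]
      (act [] (HDelta g) [] X))))))))"
    using g act_antipode_right[of g "[?e, g, ?e]" "[]"] act_unit_right[of ?e "[?e, g]" "[]"]
    by (simp add: act_HId_left)
  also have "\<dots> = act [] (HMult ?e g) [?e] (act [?e, g] (HMult g ?b) []
      (act [?e, g] (HMult ?e g) [?b] (act [?e, g, ?e, g] (HS g) [] (act [?e, g, ?e] (HDelta g) []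
      (act [?e] (HBr [?e] [g]) [g] (act [] (HDelta ?e) [g, g] (act [] (Hint ?e) [g, g]
      (act [] (HDelta g) [] X))))))))"
    using g act_massoc[of ?e g ?b "[?e, g]" "[]"] by simp
  also have "\<dots> = act [] (HMult ?e g) [?e] (act [?e, g] (HMult g ?b) []
      (act [?e, g] (HMult ?e g) [?b] (act [?e, g, ?e, g] (HS g) [] (act [?e] (HBr [?e] [g]) [g, g]
      (act [] (HDelta ?e) [g, g, g] (act [] (Hint ?e) [g, g, g] (act [] (HDelta g) [g]
      (act [] (HDelta g) [] X))))))))"
    using g act_commute[of "HBr [?e] [g]" "HDelta g" "[?e]" "[]" "[]", symmetric]
      act_commute[of "HDelta ?e" "HDelta g" "[]" "[g]" "[]", symmetric]
      act_commute[of "Hint ?e" "HDelta g" "[]" "[g]" "[]", symmetric] act_coassoc[of g "[]" "[]", symmetric]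
    by simp
  also have "\<dots> = act [g] (HMult g ?b) [] (act [] (HMult ?e g) [g, ?b]
      (act [?e, g] (HMult ?e g) [?b] (act [?e, g, ?e, g] (HS g) [] (act [?e] (HBr [?e] [g]) [g, g]
      (act [] (HDelta ?e) [g, g, g] (act [] (Hint ?e) [g, g, g] (act [] (HDelta g) [g]
      (act [] (HDelta g) [] X))))))))"
    using g act_commute[of "HMult ?e g" "HMult g ?b" "[]" "[]" "[]"] by simp
  also have "\<dots> = act [g] (HMult g ?b) [] (act [] (HMult ?e g) [g, ?b]
      (act [?e, g] (HMult ?e g) [?b] (act [?e] (HBr [?e] [g]) [g, ?b] (act [] (HDelta ?e) [g, g, ?b]
      (act [] (Hint ?e) [g, g, ?b] (act [] (HDelta g) [?b] (act [g] (HS g) []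
      (act [] (HDelta g) [] X))))))))"
    using g act_commute[of "HBr [?e] [g]" "HS g" "[?e]" "[g]" "[]", symmetric]
      act_commute[of "HDelta ?e" "HS g" "[]" "[g, g]" "[]", symmetric]
      act_commute[of "Hint ?e" "HS g" "[]" "[g, g]" "[]", symmetric]
      act_commute[of "HDelta g" "HS g" "[]" "[]" "[]", symmetric] by simp
  also have "\<dots> = act [g] (HMult g ?b) [] (act [] (HMult ?e g) [g, ?b]
      (act [?e, g] (HMult ?e g) [?b] (act [?e] (HBr [?e] [g]) [g, ?b] (act [] (HDelta ?e) [g, g, ?b]
      (act [?e] (HDelta g) [?b] (act [] (Hint ?e) [g, ?b] (act [g] (HS g) []
      (act [] (HDelta g) [] X))))))))"
    using g act_commute[of "Hint ?e" "HDelta g" "[]" "[]" "[?b]"] by simp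
  also have "\<dots> = act [g] (HMult g ?b) [] (act [] (HDelta g) [?b] (act [] (HMult ?e g) [?b]
      (act [] (Hint ?e) [g, ?b] (act [g] (HS g) [] (act [] (HDelta g) [] X)))))"
    using g act_bialg_delta_mult[of ?e g "[]" "[?b]"] by simp
  also have "\<dots> = act [g] (HMult g ?b) [] (act [] (HDelta g) [?b] (act [] (Hint g) [?b]
      (act [] (HEps g) [?b] (act [g] (HS g) [] (act [] (HDelta g) [] X)))))"
    using g act_integral[of ?e g "[]" "[?b]"] by simp
  also have "\<dots> = act [g] (HMult g ?b) [] (act [] (HDelta g) [?b] (act [] (Hint g) [?b]
      (act [] (HS g) [] X)))"
    using g act_commute[of "HEps g" "HS g" "[]" "[]" "[]"] act_counit_left[of g "[]" "[]"]
    by (simp add: act_HId_right)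
  also have "\<dots> = act [g] (HMult g ?b) [] (act [g, g] (HS g) [] (act [] (HDelta g) [g]
      (act [] (Hint g) [g] X)))"
    using g act_commute[of "Hint g" "HS g" "[]" "[]" "[]"] act_commute[of "HDelta g" "HS g" "[]" "[]" "[]"]
    by simp
  finally show ?thesis .
qed

(* x S(L_g(1)) \<diamond> L_g(2) = S(L_e(1)) \<diamond> L_e(2) x *)
lemma integral_antipode_transfer:
  assumes g: "g \<in> Mor"
  shows "act [] (HMult g (ginv G g)) [g] (act [g] (HS g) [g] (act [g] (HDelta g) [] (act [g] (Hint g) [] X))) =
         act [idsrc g] (HMult (idsrc g) g) [] (act [] (HS (idsrc g)) [idsrc g, g]
           (act [] (HDelta (idsrc g)) [g] (act [] (Hint (idsrc g)) [g] X)))"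
proof -
  let ?e = "idsrc g" and ?b = "ginv G g" and ?i = "gsrc G g"
  have g1: "set [g] \<subseteq> Mor" using g by simp
  have "act [] (HMult g ?b) [g] (act [g] (HS g) [g] (act [g] (HDelta g) [] (act [g] (Hint g) [] X))) =
      act [] (HMult g ?b) [g] (act [g] (HS g) [g] (act [g] (HDelta g) [] (act [g] (HMult ?e g) []
      (act [g] (Hint ?e) [g] (act [] (HDelta g) [] X)))))"
    using g act_integral[of ?e g "[g]" "[]"] act_counit_right[of g "[]" "[]"] by (simp add: act_HId_right)
  also have "\<dots> = act [] (HMult g ?b) [g] (act [g] (HS g) [g] (act [g] (HDelta g) []
      (act [g] (HMult ?e g) [] (act [] (HBr [?e] [g]) [g] (act [?e] (HDelta g) []
      (act [] (Hint ?e) [g] X))))))"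
    using g act_HBr_Hint[of ?i g "[]" "[g]"] act_commute[of "Hint ?e" "HDelta g" "[]" "[]" "[]", symmetric]
    by simp
  also have "\<dots> = act [] (HMult g ?b) [g] (act [g] (HS g) [g] (act [g] (HMult ?e g) [g]
      (act [g, ?e, g] (HMult ?e g) [] (act [g, ?e] (HBr [?e] [g]) [g] (act [g] (HDelta ?e) [g, g]
      (act [g, ?e] (HDelta g) [] (act [] (HBr [?e] [g]) [g] (act [?e] (HDelta g) []
      (act [] (Hint ?e) [g] X)))))))))"
    using g act_bialg_delta_mult[of ?e g "[g]" "[]"] by simp
  also have "\<dots> = act [] (HMult g ?b) [g] (act [g] (HS g) [g] (act [g] (HMult ?e g) [g]
      (act [g, ?e, g] (HMult ?e g) [] (act [g, ?e] (HBr [?e] [g]) [g] (act [g, ?e, ?e] (HDelta g) []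
      (act [] (HBr [?e] [g]) [?e, g] (act [?e] (HBr [?e] [g]) [g] (act [] (HDelta ?e) [g, g]
      (act [?e] (HDelta g) [] (act [] (Hint ?e) [g] X))))))))))"
    using g act_commute[of "HDelta ?e" "HDelta g" "[g]" "[]" "[]"] act_HBr_HDelta_left[of ?i g "[]" "[g]"]
    by simp
  also have "\<dots> = act [] (HMult g ?b) [g] (act [g] (HS g) [g] (act [g] (HMult ?e g) [g]
      (act [g, ?e, g] (HMult ?e g) [] (act [g, ?e] (HBr [?e] [g]) [g] (act [] (HBr [?e] [g]) [?e, g, g]
      (act [?e] (HBr [?e] [g]) [g, g] (act [?e, ?e, g] (HDelta g) [] (act [] (HDelta ?e) [g, g]
      (act [?e] (HDelta g) [] (act [] (Hint ?e) [g] X))))))))))"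
    using g act_commute[of "HBr [?e] [g]" "HDelta g" "[]" "[?e]" "[]", symmetric]
      act_commute[of "HBr [?e] [g]" "HDelta g" "[?e]" "[]" "[]", symmetric] by simp
  also have "\<dots> = act [] (HMult g ?b) [g] (act [g] (HS g) [g] (act [g] (HMult ?e g) [g]
      (act [g, ?e, g] (HMult ?e g) [] (act [] (HBr [?e] [g]) [g, ?e, g] (act [?e, g] (HBr [?e] [g]) [g]
      (act [?e] (HBr [?e] [g]) [g, g] (act [] (HDelta ?e) [g, g, g] (act [?e] (HDelta g) [g]
      (act [?e] (HDelta g) [] (act [] (Hint ?e) [g] X))))))))))"
    using g act_commute[of "HBr [?e] [g]" "HBr [?e] [g]" "[]" "[]" "[g]", symmetric]
      act_commute[of "HDelta ?e" "HDelta g" "[]" "[g]" "[]", symmetric]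
      act_coassoc[of g "[?e]" "[]", symmetric] by simp
  also have "\<dots> = act [] (HMult g ?b) [g] (act [g] (HS g) [g] (act [g] (HMult ?e g) [g]
      (act [g, ?e, g] (HMult ?e g) [] (act [] (HBr [?e] [g]) [g, ?e, g] (act [?e] (HDelta g) [?e, g]
      (act [?e] (HBr [?e] [g]) [g] (act [] (HDelta ?e) [g, g] (act [?e] (HDelta g) []
      (act [] (Hint ?e) [g] X)))))))))"
    using g act_commute[of "HDelta ?e" "HDelta g" "[]" "[]" "[g]"]
      act_HBr_HDelta_right[of ?e g "[?e]" "[g]"] by simp
  also have "\<dots> = act [] (HMult g ?b) [g] (act [g] (HS g) [g] (act [g] (HMult ?e g) [g]
      (act [] (HBr [?e] [g]) [g, g] (act [?e] (HDelta g) [g] (act [?e, g] (HMult ?e g) []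
      (act [?e] (HBr [?e] [g]) [g] (act [] (HDelta ?e) [g, g] (act [?e] (HDelta g) []
      (act [] (Hint ?e) [g] X)))))))))"
    using g act_commute[of "HBr [?e] [g]" "HMult ?e g" "[]" "[g]" "[]", symmetric]
      act_commute[of "HDelta g" "HMult ?e g" "[?e]" "[]" "[]", symmetric] by simp
  also have "\<dots> = act [?e] (HEps g) [g] (act [] (HS ?e) [g, g] (act [?e, g] (HMult ?e g) []
      (act [?e] (HBr [?e] [g]) [g] (act [] (HDelta ?e) [g, g] (act [?e] (HDelta g) []
      (act [] (Hint ?e) [g] X))))))"
    using g antipode_mult_cancel[OF g g1] by simp
  also have "\<dots> = act [?e] (HMult ?e g) [] (act [] (HS ?e) [?e, g] (act [] (HDelta ?e) [g]
      (act [] (Hint ?e) [g] X)))"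
    using g act_commute[of "HS ?e" "HMult ?e g" "[]" "[g]" "[]"]
      act_commute[of "HEps g" "HMult ?e g" "[?e]" "[]" "[]"]
      act_commute[of "HS ?e" "HEps g" "[]" "[]" "[?e, g]", symmetric] act_HBr_HEps[of ?e g "[?e]" "[g]"]
      act_commute[of "HDelta ?e" "HEps g" "[]" "[]" "[g]", symmetric] act_counit_left[of g "[?e]" "[]"]
    by (simp add: act_HId_right)
  finally show ?thesis .
qed

lemma act_snake_gen:
  assumes g: "g \<in> Mor"
  shows "act [] (Hcoint (gsrc G g)) [g] (act [] (HMult g (ginv G g)) [g]
           (act [g] (HS g) [g] (act [g] (HDelta g) [] (act [g] (Hint g) [] X)))) =
         act [] (HId [g]) [] X"
proof -
  let ?e = "idsrc g" and ?i = "gsrc G g"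
  have "act [] (Hcoint ?i) [g] (act [] (HMult g (ginv G g)) [g] (act [g] (HS g) [g]
      (act [g] (HDelta g) [] (act [g] (Hint g) [] X)))) =
      act [] (Hcoint ?i) [g] (act [?e] (HMult ?e g) [] (act [] (HS ?e) [?e, g] (act [] (HDelta ?e) [g]
      (act [] (Hint ?e) [g] X))))"
    using integral_antipode_transfer[OF g] by simp
  also have "\<dots> = act [] (HMult ?e g) [] (act [] (Hcoint ?i) [?e, g] (act [] (HS ?e) [?e, g]
      (act [] (HDelta ?e) [g] (act [] (Hint ?e) [g] X))))"
    using g act_commute[of "Hcoint ?i" "HMult ?e g" "[]" "[]" "[]"] by simp
  also have "\<dots> = act [] (HMult ?e g) [] (act [] (HUnit ?i) [g] X)"
    using g cointegral_antipode_integral[of ?i "[g]"] by simp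
  also have "\<dots> = act [] (HId [g]) [] X"
    using g act_unit_left[of g "[]" "[]"] by simp
  finally show ?thesis .
qed

lemma act_snake_dual_gen:
  assumes g: "g \<in> Mor"
  shows "act [g] (Hcoint (gsrc G g)) [] (act [g] (HMult g (ginv G g)) []
           (act [g, g] (HS g) [] (act [] (HDelta g) [g] (act [] (Hint g) [g] X)))) =
         act [] (HId [g]) [] X"
proof -
  let ?e = "idsrc g" and ?b = "ginv G g" and ?i = "gsrc G g"
  have "act [g] (Hcoint ?i) [] (act [g] (HMult g ?b) [] (act [g, g] (HS g) [] (act [] (HDelta g) [g]
      (act [] (Hint g) [g] X)))) =
      act [g] (Hcoint ?i) [] (act [] (HMult ?e g) [?e] (act [?e] (HBr [?e] [g]) []
      (act [] (HDelta ?e) [g] (act [] (Hint ?e) [g] X))))"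
    using integral_transfer[OF g, of X] by simp
  also have "\<dots> = act [] (HMult ?e g) [] (act [?e, g] (Hcoint ?i) [] (act [?e] (HBr [?e] [g]) []
      (act [] (HDelta ?e) [g] (act [] (Hint ?e) [g] X))))"
    using g act_commute[of "HMult ?e g" "Hcoint ?i" "[]" "[]" "[]"] by simp
  also have "\<dots> = act [] (HMult ?e g) [] (act [?e] (Hcoint ?i) [g] (act [] (HDelta ?e) [g]
      (act [] (Hint ?e) [g] X)))"
    using g act_HBr_Hcoint[of ?i g "[?e]" "[]"] by simp
  also have "\<dots> = act [] (HId [g]) [] X"
    using g act_cointegral[of ?i "[]" "[g]"] act_normal1[of ?i "[]" "[g]"] act_unit_left[of g "[]" "[]"]
    by (simp add: act_HId_right)
  finally show ?thesis .
qed

section \<open>Zig-zag identities\<close>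

lemma hLam_gen_hlam_gen_hwt [simp]:
  "g \<in> Mor \<Longrightarrow> hwt G (hLam_gen g)" "hdom G (hLam_gen g) = []" "hcod G (hLam_gen g) = [g, g]"
  "g \<in> Mor \<Longrightarrow> hwt G (hlam_gen G g)" "g \<in> Mor \<Longrightarrow> hdom G (hlam_gen G g) = [g, g]"
  "hcod G (hlam_gen G g) = []"
  by (auto simp: hLam_gen_def hlam_gen_def)

lemma zigzag_gen:
  assumes "g \<in> Mor"
  shows "heq G (HComp (HTens (hlam_gen G g) (HId [g])) (HTens (HId [g]) (hLam_gen g))) (HId [g])"
proof (rule heq_HId_if_act_fixes)
  show "act [] (HComp (HTens (hlam_gen G g) (HId [g])) (HTens (HId [g]) (hLam_gen g))) []
      (hcls (HId [g])) = hcls (HId [g])"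
    using assms act_snake_gen[OF assms]
    by (simp add: act_unfold hLam_gen_def hlam_gen_def act_HId_hcls)
qed (use assms in auto)

lemma zigzag_dual_gen:
  assumes "g \<in> Mor"
  shows "heq G (HComp (HTens (HId [g]) (hlam_gen G g)) (HTens (hLam_gen g) (HId [g]))) (HId [g])"
proof (rule heq_HId_if_act_fixes)
  show "act [] (HComp (HTens (HId [g]) (hlam_gen G g)) (HTens (hLam_gen g) (HId [g]))) []
      (hcls (HId [g])) = hcls (HId [g])"
    using assms act_snake_dual_gen[OF assms]
    by (simp add: act_unfold hLam_gen_def hlam_gen_def act_HId_hcls)
qed (use assms in auto)

lemma act_zigzag_gen:
  "\<lbrakk>g \<in> Mor; set C \<subseteq> Mor; set D \<subseteq> Mor\<rbrakk> \<Longrightarrow>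
    act C (hlam_gen G g) (g # D) (act (C @ [g]) (hLam_gen g) D X) = act C (HId [g]) D X"
  using act_heq[OF zigzag_gen, of g C D X] by (simp add: act_unfold)

lemma act_zigzag_dual_gen:
  "\<lbrakk>g \<in> Mor; set C \<subseteq> Mor; set D \<subseteq> Mor\<rbrakk> \<Longrightarrow>
    act (C @ [g]) (hlam_gen G g) D (act C (hLam_gen g) (g # D) X) = act C (HId [g]) D X"
  using act_heq[OF zigzag_dual_gen, of g C D X] by (simp add: act_unfold)

lemma hLam_hlam_hwt:
  assumes "set A \<subseteq> Mor"
  shows "hwt G (hLam G A)" "hdom G (hLam G A) = []" "hcod G (hLam G A) = rev A @ A"
    "hwt G (hlam G A)" "hdom G (hlam G A) = A @ rev A" "hcod G (hlam G A) = []"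
  using assms by (induction A) (auto simp: hdual_def)

lemma act_zigzag:
  assumes "set A \<subseteq> Mor" "set C \<subseteq> Mor" "set D \<subseteq> Mor"
  shows "act C (hlam G A) (A @ D) (act (C @ A) (hLam G A) D X) = act C (HId A) D X"
  using assms
proof (induction A arbitrary: C)
  case Nil
  then show ?case by (simp add: act_HId_left)
next
  case (Cons g B)
  then have g: "g \<in> Mor" and B: "set B \<subseteq> Mor" by auto
  note wt = hLam_hlam_hwt[OF B]
  have "act C (hlam G (g # B)) ((g # B) @ D) (act (C @ g # B) (hLam G (g # B)) D X) =
      act C (hlam_gen G g) (g # B @ D) (act (C @ [g]) (hlam G B) (g # g # B @ D)
        (act (C @ g # B @ rev B) (hLam_gen g) (B @ D) (act (C @ g # B) (hLam G B) D X)))"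
    using g B Cons.prems wt by (simp add: act_unfold hdual_def)
  also have "\<dots> = act C (hlam_gen G g) (g # B @ D) (act (C @ [g]) (hLam_gen g) (B @ D)
        (act (C @ [g]) (hlam G B) (B @ D) (act (C @ g # B) (hLam G B) D X)))"
    using g B Cons.prems wt act_commute[of "hlam G B" "hLam_gen g" "C @ [g]" "[]" "B @ D"] by simp
  also have "\<dots> = act C (HId [g]) (B @ D) X"
    using g B Cons.prems wt Cons.IH[of "C @ [g]"] act_zigzag_gen[of g C "B @ D"]
    by (simp add: act_HId_right)
  also have "\<dots> = act C (HId (g # B)) D X"
    using g B Cons.prems by (intro act_HId_eq) auto
  finally show ?case .
qed

lemma act_zigzag_dual:
  assumes "set A \<subseteq> Mor" "set C \<subseteq> Mor" "set D \<subseteq> Mor"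
  shows "act (C @ rev A) (hlam G A) D (act C (hLam G A) (rev A @ D) X) = act C (HId (rev A)) D X"
  using assms
proof (induction A arbitrary: D)
  case Nil
  then show ?case by (simp add: act_HId_left)
next
  case (Cons g B)
  then have g: "g \<in> Mor" and B: "set B \<subseteq> Mor" by auto
  note wt = hLam_hlam_hwt[OF B]
  have "act (C @ rev (g # B)) (hlam G (g # B)) D (act C (hLam G (g # B)) (rev (g # B) @ D) X) =
      act (C @ rev B @ [g]) (hlam_gen G g) D (act (C @ rev B @ [g, g]) (hlam G B) (g # D)
        (act (C @ rev B) (hLam_gen g) (B @ rev B @ g # D) (act C (hLam G B) (rev B @ g # D) X)))"
    using g B Cons.prems wt by (simp add: act_unfold hdual_def)
  also have "\<dots> = act (C @ rev B @ [g]) (hlam_gen G g) D (act (C @ rev B) (hLam_gen g) (g # D)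
        (act (C @ rev B) (hlam G B) (g # D) (act C (hLam G B) (rev B @ g # D) X)))"
    using g B Cons.prems wt act_commute[of "hLam_gen g" "hlam G B" "C @ rev B" "[]" "g # D", symmetric]
    by simp
  also have "\<dots> = act (C @ rev B) (HId [g]) D X"
    using g B Cons.prems wt Cons.IH[of "g # D"] act_zigzag_dual_gen[of g "C @ rev B" D]
    by (simp add: act_HId_right)
  also have "\<dots> = act C (HId (rev (g # B))) D X"
    using g B Cons.prems by (intro act_HId_eq) auto
  finally show ?case .
qed

lemma is_right_dual_gen:
  assumes "g \<in> Mor"
  shows "is_right_dual G [g] [g] (hLam_gen g) (hlam_gen G g)"
  unfolding is_right_dual_def using assms zigzag_gen zigzag_dual_gen by simp

lemma is_right_dual_word:
  assumes A: "set A \<subseteq> Mor"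
  shows "is_right_dual G A (hdual A) (hLam G A) (hlam G A)"
proof -
  have "heq G (HComp (HTens (hlam G A) (HId A)) (HTens (HId A) (hLam G A))) (HId A)"
  proof (rule heq_HId_if_act_fixes)
    show "act [] (HComp (HTens (hlam G A) (HId A)) (HTens (HId A) (hLam G A))) []
        (hcls (HId A)) = hcls (HId A)"
      using A hLam_hlam_hwt[OF A] act_zigzag[OF A, of "[]" "[]"] by (simp add: act_unfold act_HId_hcls)
  qed (use A hLam_hlam_hwt[OF A] in auto)
  moreover have "heq G (HComp (HTens (HId (rev A)) (hlam G A)) (HTens (hLam G A) (HId (rev A))))
      (HId (rev A))"
  proof (rule heq_HId_if_act_fixes)
    show "act [] (HComp (HTens (HId (rev A)) (hlam G A)) (HTens (hLam G A) (HId (rev A)))) []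
        (hcls (HId (rev A))) = hcls (HId (rev A))"
      using A hLam_hlam_hwt[OF A] act_zigzag_dual[OF A, of "[]" "[]"]
      by (simp add: act_unfold act_HId_hcls)
  qed (use A hLam_hlam_hwt[OF A] in auto)
  ultimately show ?thesis
    unfolding is_right_dual_def hdual_def using hLam_hlam_hwt[OF A] by simp
qed

end

theorem lemma5p6:
  fixes G :: "('o, 'g) groupoid"
  assumes "is_groupoid G"
  shows "(\<forall>g\<in>gMor G. is_right_dual G [g] [g] (hLam_gen g) (hlam_gen G g)) \<and>
         (\<forall>A. set A \<subseteq> gMor G \<longrightarrow> is_right_dual G A (hdual A) (hLam G A) (hlam G A))"
proof -
  interpret free_hopf_category G by (rule free_hopf_category.intro[OF assms])
  show ?thesis using is_right_dual_gen is_right_dual_word by blast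
qed

end
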